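(* Let $n\ge2$, let $I\subseteq[0,\infty)$ be an interval with non-empty interior, let $\tilde{\mathbf{P}}\colon I\to\mathbb{R}^n$ be a generalized $n$-system and let $\epsilon>0$. Then there exists an $n$-system $\mathbf{P}$ on $I$ such that $\|\tilde{\mathbf{P}}(q)-\mathbf{P}(q)\|_\infty\le\epsilon$ for every $q\in I$.
   Context: Let $I\subseteq[0,\infty)$ be an interval with non-empty interior. A map $\mathbf{P}\colon I\to\mathbb{R}^n$ is continuous piecewise linear if it is continuous, the set $D$ of points of $I$ where it is not differentiable (including the endpoints of $I$ that lie in $I$) is discrete in $I$, and its derivative is locally constant on $I\setminus D$. An $n$-system on $I$ is a continuous piecewise linear map $\mathbf{P}=(P_1,\dots,P_n)\colon I\to\mathbb{R}^n$ such that: (S1) for each $q\in I$, $0\le P_1(q)\le\cdots\le P_n(q)$ and $P_1(q)+\cdots+P_n(q)=q$; (S2) on each non-empty open subinterval $H$ of $I$ on which $\mathbf{P}$ is differentiable, there is $r\in\{1,\dots,n\}$ such that $P_r$ has slope $1$ on $H$ and all $P_j$ with $j\ne r$ are constant on $H$; (S3) if $q$ is an interior point of $I$ where $\mathbf{P}$ is not differentiable and the integers $r,s$ with $P_r'(q^-)=P_s'(q^+)=1$ satisfy $r<s$, then $P_r(q)=P_{r+1}(q)=\cdots=P_s(q)$. A generalized $n$-system on $I$ is a continuous piecewise linear map $\mathbf{P}=(P_1,\dots,P_n)\colon I\to\mathbb{R}^n$ such that: (G1) for each $q\in I$, $0\le P_1(q)\le\cdots\le P_n(q)$ and $P_1(q)+\cdots+P_n(q)=q$;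 (G2) on each non-empty open subinterval $H$ of $I$ on which $\mathbf{P}$ is differentiable, there are integers $1\le \underline{r}\le\overline{r}\le n$ such that $P_{\underline r},\dots,P_{\overline r}$ coincide on $H$ and have slope $1/(\overline r-\underline r+1)$, while every other $P_j$ is constant on $H$; (G3) if $q$ is an interior point of $I$ where $\mathbf{P}$ is not differentiable, and $\underline r,\overline r,\underline s,\overline s$ are the integers with $P_j'(q^-)=1/(\overline r-\underline r+1)$ for $\underline r\le j\le\overline r$ and $P_j'(q^+)=1/(\overline s-\underline s+1)$ for $\underline s\le j\le \overline s$ (as in (G2) on the adjacent intervals), and if $\underline r<\overline s$, then $P_{\underline r}(q)=P_{\underline r+1}(q)=\cdots=P_{\overline s}(q)$. *)

theory Defs
  imports "HOL-Analysis.Analysis"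
begin

text \<open>A map I -> R^n is represented as P :: real => nat => real, with components
  P q 1, ..., P q n (indices outside 1..n are irrelevant).\<close>

definition nondiff_set :: "nat \<Rightarrow> real set \<Rightarrow> (real \<Rightarrow> nat \<Rightarrow> real) \<Rightarrow> real set" where
  "nondiff_set n I P = {q \<in> I. q \<notin> interior I \<or>
      (\<exists>j\<in>{1..n}. \<not> ((\<lambda>t. P t j) differentiable (at q)))}"

definition cont_piecewise_linear :: "nat \<Rightarrow> real set \<Rightarrow> (real \<Rightarrow> nat \<Rightarrow> real) \<Rightarrow> bool" where
  "cont_piecewise_linear n I P \<longleftrightarrow>
     (\<forall>j\<in>{1..n}. continuous_on I (\<lambda>t. P t j)) \<and>
     \<comment> \<open>D is discrete in I\<close>
     (\<forall>q\<in>I. \<exists>e>0. \<forall>x\<in>nondiff_set n I P. \<bar>x - q\<bar> < e \<longrightarrow> x = q) \<and>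
     \<comment> \<open>derivative locally constant on I - D\<close>
     (\<forall>q\<in>I - nondiff_set n I P. \<exists>e>0. \<forall>x\<in>I - nondiff_set n I P. \<bar>x - q\<bar> < e \<longrightarrow>
        (\<forall>j\<in>{1..n}. deriv (\<lambda>t. P t j) x = deriv (\<lambda>t. P t j) q))"

definition sys_cond1 :: "nat \<Rightarrow> real set \<Rightarrow> (real \<Rightarrow> nat \<Rightarrow> real) \<Rightarrow> bool" where
  "sys_cond1 n I P \<longleftrightarrow>
     (\<forall>q\<in>I. 0 \<le> P q 1 \<and> (\<forall>j\<in>{1..<n}. P q j \<le> P q (Suc j)) \<and> (\<Sum>j=1..n. P q j) = q)"

definition diff_subinterval :: "nat \<Rightarrow> real set \<Rightarrow> (real \<Rightarrow> nat \<Rightarrow> real) \<Rightarrow> real set \<Rightarrow> bool" where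
  "diff_subinterval n I P H \<longleftrightarrow> H \<subseteq> I \<and> open H \<and> is_interval H \<and> H \<noteq> {} \<and>
     (\<forall>x\<in>H. \<forall>j\<in>{1..n}. (\<lambda>t. P t j) differentiable (at x))"

definition n_system :: "nat \<Rightarrow> real set \<Rightarrow> (real \<Rightarrow> nat \<Rightarrow> real) \<Rightarrow> bool" where
  "n_system n I P \<longleftrightarrow>
     cont_piecewise_linear n I P \<and> sys_cond1 n I P \<and>
     \<comment> \<open>(S2)\<close>
     (\<forall>H. diff_subinterval n I P H \<longrightarrow>
        (\<exists>r\<in>{1..n}. \<forall>x\<in>H. \<forall>j\<in>{1..n}.
            ((\<lambda>t. P t j) has_real_derivative (if j = r then 1 else 0)) (at x))) \<and>
     \<comment> \<open>(S3)\<close>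
     (\<forall>q\<in>interior I \<inter> nondiff_set n I P. \<forall>r\<in>{1..n}. \<forall>s\<in>{1..n}.
        ((\<lambda>t. P t r) has_real_derivative 1) (at_left q) \<and>
        ((\<lambda>t. P t s) has_real_derivative 1) (at_right q) \<and> r < s \<longrightarrow>
        (\<forall>j\<in>{r..s}. P q j = P q r))"

definition gen_n_system :: "nat \<Rightarrow> real set \<Rightarrow> (real \<Rightarrow> nat \<Rightarrow> real) \<Rightarrow> bool" where
  "gen_n_system n I P \<longleftrightarrow>
     cont_piecewise_linear n I P \<and> sys_cond1 n I P \<and>
     \<comment> \<open>(G2)\<close>
     (\<forall>H. diff_subinterval n I P H \<longrightarrow>
        (\<exists>rl rh. 1 \<le> rl \<and> rl \<le> rh \<and> rh \<le> n \<and>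
           (\<forall>x\<in>H. \<forall>j\<in>{rl..rh}. P x j = P x rl) \<and>
           (\<forall>x\<in>H. \<forall>j\<in>{1..n}.
              ((\<lambda>t. P t j) has_real_derivative
                 (if rl \<le> j \<and> j \<le> rh then 1 / real (rh - rl + 1) else 0)) (at x)))) \<and>
     \<comment> \<open>(G3)\<close>
     (\<forall>q\<in>interior I \<inter> nondiff_set n I P. \<forall>rl rh sl sh.
        1 \<le> rl \<and> rl \<le> rh \<and> rh \<le> n \<and> 1 \<le> sl \<and> sl \<le> sh \<and> sh \<le> n \<and>
        (\<forall>j\<in>{1..n}. ((\<lambda>t. P t j) has_real_derivative
            (if rl \<le> j \<and> j \<le> rh then 1 / real (rh - rl + 1) else 0)) (at_left q)) \<and>
        (\<forall>j\<in>{1..n}. ((\<lambda>t. P t j) has_real_derivative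
            (if sl \<le> j \<and> j \<le> sh then 1 / real (sh - sl + 1) else 0)) (at_right q)) \<and>
        rl < sh \<longrightarrow>
        (\<forall>j\<in>{rl..sh}. P q j = P q rl))"

end

theory Submission
  imports Defs
begin

section \<open>A local criterion for $n$-systems\<close>

text \<open>That exactly one coordinate moves on each side is not
  required: it follows from the sum condition in (S1).\<close>

definition locally_unit_slopes :: "nat \<Rightarrow> real set \<Rightarrow> (real \<Rightarrow> nat \<Rightarrow> real) \<Rightarrow> real \<Rightarrow> bool" where
  "locally_unit_slopes n I P x \<longleftrightarrow> (\<exists>e>0. \<exists>\<alpha> \<beta>. (\<forall>j\<in>{1..n}. \<alpha> j \<in> {0,1} \<and> \<beta> j \<in> {0,1}) \<and>
     (\<forall>y\<in>I. x - e < y \<and> y \<le> x \<longrightarrow> (\<forall>j\<in>{1..n}. P y j = P x j + \<alpha> j * (y - x))) \<and>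
     (\<forall>y\<in>I. x \<le> y \<and> y < x + e \<longrightarrow> (\<forall>j\<in>{1..n}. P y j = P x j + \<beta> j * (y - x))) \<and>
     (x \<in> interior I \<longrightarrow> (\<forall>a\<in>{1..n}. \<forall>b\<in>{1..n}. \<alpha> a = 1 \<and> \<beta> b = 1 \<and> a < b \<longrightarrow>
        (\<forall>j\<in>{a..b}. P x j = P x a))))"

lemma locally_unit_slopesE:
  assumes "locally_unit_slopes n I P x"
  obtains e \<alpha> \<beta> where "e > 0" "\<forall>j\<in>{1..n}. \<alpha> j \<in> {0,1} \<and> \<beta> j \<in> {0,1}"
    "\<forall>y\<in>I. x - e < y \<and> y \<le> x \<longrightarrow> (\<forall>j\<in>{1..n}. P y j = P x j + \<alpha> j * (y - x))"
    "\<forall>y\<in>I. x \<le> y \<and> y < x + e \<longrightarrow> (\<forall>j\<in>{1..n}. P y j = P x j + \<beta> j * (y - x))"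
    "x \<in> interior I \<longrightarrow> (\<forall>a\<in>{1..n}. \<forall>b\<in>{1..n}. \<alpha> a = 1 \<and> \<beta> b = 1 \<and> a < b \<longrightarrow>
        (\<forall>j\<in>{a..b}. P x j = P x a))"
  using assms unfolding locally_unit_slopes_def
  apply (elim exE conjE)
  apply (rule that)
  apply assumption+
  done

lemma locally_unit_slopesI:
  assumes "eL > 0" "eR > 0" "\<forall>j\<in>{1..n}. \<alpha> j \<in> {0,1} \<and> \<beta> j \<in> {0,1}"
    and "\<forall>y\<in>I. x - eL < y \<and> y \<le> x \<longrightarrow> (\<forall>j\<in>{1..n}. P y j = P x j + \<alpha> j * (y - x))"
    and "\<forall>y\<in>I. x \<le> y \<and> y < x + eR \<longrightarrow> (\<forall>j\<in>{1..n}. P y j = P x j + \<beta> j * (y - x))"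
    and "x \<in> interior I \<Longrightarrow> \<forall>a\<in>{1..n}. \<forall>b\<in>{1..n}. \<alpha> a = 1 \<and> \<beta> b = 1 \<and> a < b \<longrightarrow>
        (\<forall>j\<in>{a..b}. P x j = P x a)"
  shows "locally_unit_slopes n I P x"
proof -
  have L: "\<forall>y\<in>I. x - min eL eR < y \<and> y \<le> x \<longrightarrow> (\<forall>j\<in>{1..n}. P y j = P x j + \<alpha> j * (y - x))"
  proof (intro ballI impI)
    fix y j assume "y \<in> I" "x - min eL eR < y \<and> y \<le> x" "j \<in> {1..n}"
    hence "x - eL < y \<and> y \<le> x" by linarith
    thus "P y j = P x j + \<alpha> j * (y - x)" using bspec[OF assms(4) \<open>y \<in> I\<close>] \<open>j \<in> {1..n}\<close> by blast
  qed
  have R: "\<forall>y\<in>I. x \<le> y \<and> y < x + min eL eR \<longrightarrow> (\<forall>j\<in>{1..n}. P y j = P x j + \<beta> j * (y - x))"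
  proof (intro ballI impI)
    fix y j assume "y \<in> I" "x \<le> y \<and> y < x + min eL eR" "j \<in> {1..n}"
    hence "x \<le> y \<and> y < x + eR" by linarith
    thus "P y j = P x j + \<beta> j * (y - x)" using bspec[OF assms(5) \<open>y \<in> I\<close>] \<open>j \<in> {1..n}\<close> by blast
  qed
  have "min eL eR > 0" using assms(1,2) by simp
  thus ?thesis unfolding locally_unit_slopes_def
    by (intro exI[of _ "min eL eR"] exI[of _ \<alpha>] exI[of _ \<beta>] conjI impI L R assms(3) assms(6))
qed

lemma has_real_derivative_at_left_if_affine:
  fixes f :: "real \<Rightarrow> real"
  assumes "e > 0" "\<And>y. x - e < y \<Longrightarrow> y < x \<Longrightarrow> f y = f x + s * (y - x)"
  shows "(f has_real_derivative s) (at_left x)"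
  unfolding has_field_derivative_iff
proof (rule tendsto_eventually)
  show "\<forall>\<^sub>F y in at_left x. (f y - f x) / (y - x) = s"
    using eventually_at_left_real[of "x - e" x] assms by (auto elim!: eventually_mono)
qed

lemma has_real_derivative_at_right_if_affine:
  fixes f :: "real \<Rightarrow> real"
  assumes "e > 0" "\<And>y. x < y \<Longrightarrow> y < x + e \<Longrightarrow> f y = f x + s * (y - x)"
  shows "(f has_real_derivative s) (at_right x)"
  unfolding has_field_derivative_iff
proof (rule tendsto_eventually)
  show "\<forall>\<^sub>F y in at_right x. (f y - f x) / (y - x) = s"
    using eventually_at_right_real[of x "x + e"] assms by (auto elim!: eventually_mono)
qed

lemma has_real_derivative_if_affine_on_open:
  fixes f :: "real \<Rightarrow> real"
  assumes "open S" "y \<in> S" "\<And>z. z \<in> S \<Longrightarrow> f z = c + s * z"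
  shows "(f has_real_derivative s) (at y)"
proof -
  have "((\<lambda>z. c + s * z) has_real_derivative s) (at y)"
    by (auto intro!: derivative_eq_intros)
  thus ?thesis
    by (rule has_field_derivative_transform_within_open[OF _ assms(1,2)]) (use assms(3) in auto)
qed

lemma interior_of_interval_between:
  fixes I :: "real set"
  assumes "is_interval I" "a \<in> I" "b \<in> I" "a < y" "y < b"
  shows "y \<in> interior I"
proof -
  have "{a<..<b} \<subseteq> I"
  proof
    fix z assume "z \<in> {a<..<b}"
    hence "a \<le> z" "z \<le> b" by auto
    thus "z \<in> I" using assms(1)[unfolded is_interval_1] assms(2,3) by blast
  qed
  hence "{a<..<b} \<subseteq> interior I" by (intro interior_maximal) auto
  thus ?thesis using assms(4,5) by auto
qed

lemma interval_punctured_nhd_interior: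
  fixes I :: "real set"
  assumes "is_interval I" "x \<in> I"
  shows "\<exists>e>0. \<forall>y\<in>I. y \<noteq> x \<and> \<bar>y - x\<bar> < e \<longrightarrow> y \<in> interior I"
proof -
  have right: "\<exists>e>0. \<forall>y\<in>I. x < y \<and> y < x + e \<longrightarrow> y \<in> interior I"
  proof (cases "\<exists>m\<in>I. x < m \<and> (\<forall>z\<in>I. z \<le> m)")
    case True
    then obtain m where m: "m \<in> I" "x < m" "\<forall>z\<in>I. z \<le> m" by blast
    have "y \<in> interior I" if "x < y" "y < x + (m - x)" for y
      using interior_of_interval_between[OF assms(1,2) m(1)] that by simp
    thus ?thesis using m(2) by (intro exI[of _ "m - x"]) auto
  next
    case False
    have "y \<in> interior I" if y: "y \<in> I" "x < y" for y
    proof -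
      obtain z where "z \<in> I" "y < z" using False y by (meson le_less_linear less_trans)
      thus ?thesis using interior_of_interval_between[OF assms] y by blast
    qed
    thus ?thesis by (intro exI[of _ 1]) auto
  qed
  have left: "\<exists>e>0. \<forall>y\<in>I. x - e < y \<and> y < x \<longrightarrow> y \<in> interior I"
  proof (cases "\<exists>m\<in>I. m < x \<and> (\<forall>z\<in>I. m \<le> z)")
    case True
    then obtain m where m: "m \<in> I" "m < x" "\<forall>z\<in>I. m \<le> z" by blast
    have "y \<in> interior I" if "x - (x - m) < y" "y < x" for y
      using interior_of_interval_between[OF assms(1) m(1) assms(2)] that by simp
    thus ?thesis using m(2) by (intro exI[of _ "x - m"]) auto
  next
    case False
    have "y \<in> interior I" if y: "y \<in> I" "y < x" for y
    proof -
      obtain z where "z \<in> I" "z < y" using False y by (meson le_less_linear less_trans)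
      thus ?thesis using interior_of_interval_between[OF assms(1) _ assms(2)] y by blast
    qed
    thus ?thesis by (intro exI[of _ 1]) auto
  qed
  obtain e1 e2 where "e1 > 0" "e2 > 0"
    "\<forall>y\<in>I. x < y \<and> y < x + e1 \<longrightarrow> y \<in> interior I" "\<forall>y\<in>I. x - e2 < y \<and> y < x \<longrightarrow> y \<in> interior I"
    using left right by blast
  thus ?thesis by (intro exI[of _ "min e1 e2"]) (auto simp: abs_if split: if_splits)
qed

lemma indicator_if_01_sum_1:
  fixes \<alpha> :: "nat \<Rightarrow> real"
  assumes "\<forall>j\<in>{1..n}. \<alpha> j \<in> {0,1}" "(\<Sum>j=1..n. \<alpha> j) = 1"
  shows "\<exists>r\<in>{1..n}. \<forall>j\<in>{1..n}. \<alpha> j = (if j = r then 1 else 0)"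
proof -
  obtain r where r: "r \<in> {1..n}" "\<alpha> r = 1"
  proof (rule ccontr)
    assume "\<not> thesis"
    hence "\<forall>j\<in>{1..n}. \<alpha> j = 0" using assms(1) that by blast
    thus False using assms(2) by simp
  qed
  have nonneg: "\<forall>j\<in>{1..n}. \<alpha> j \<ge> 0"
  proof
    fix j assume "j \<in> {1..n}"
    thus "\<alpha> j \<ge> 0" using assms(1) by (cases "\<alpha> j = 0") auto
  qed
  have "(\<Sum>j\<in>{1..n}-{r}. \<alpha> j) = 0"
    using assms(2) r sum.remove[of "{1..n}" r \<alpha>] by simp
  hence "\<forall>j\<in>{1..n}-{r}. \<alpha> j = 0"
    using nonneg by (subst (asm) sum_nonneg_eq_0_iff) auto
  thus ?thesis using r by (intro bexI[of _ r]) auto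
qed

lemma continuous_on_if_locally_unit_slopes:
  assumes loc: "\<forall>x\<in>I. locally_unit_slopes n I P x" and j: "j \<in> {1..n}"
  shows "continuous_on I (\<lambda>t. P t j)"
  unfolding continuous_on_eq_continuous_within
proof
  fix x assume x: "x \<in> I"
  obtain e \<alpha> \<beta> where e: "e > 0" and ab: "\<forall>j\<in>{1..n}. \<alpha> j \<in> {0,1} \<and> \<beta> j \<in> {0,1}"
    and L: "\<forall>y\<in>I. x - e < y \<and> y \<le> x \<longrightarrow> (\<forall>j\<in>{1..n}. P y j = P x j + \<alpha> j * (y - x))"
    and R: "\<forall>y\<in>I. x \<le> y \<and> y < x + e \<longrightarrow> (\<forall>j\<in>{1..n}. P y j = P x j + \<beta> j * (y - x))"
    by (rule locally_unit_slopesE[OF bspec[OF loc x]])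
  have lipschitz: "\<bar>P y j - P x j\<bar> \<le> \<bar>y - x\<bar>" if "y \<in> I" "\<bar>y - x\<bar> < e" for y
  proof (cases "y \<le> x")
    case True
    moreover have "\<alpha> j \<in> {0,1}" using ab j by blast
    ultimately have "P y j - P x j = \<alpha> j * (y - x)" using L that j by auto
    thus ?thesis using \<open>\<alpha> j \<in> {0,1}\<close> by (auto simp: abs_mult)
  next
    case False
    moreover have "\<beta> j \<in> {0,1}" using ab j by blast
    ultimately have "P y j - P x j = \<beta> j * (y - x)" using R that j by auto
    thus ?thesis using \<open>\<beta> j \<in> {0,1}\<close> by (auto simp: abs_mult)
  qed
  show "continuous (at x within I) (\<lambda>t. P t j)"
    unfolding continuous_within_eps_delta
  proof (intro allI impI)
    fix \<epsilon> :: real assume "\<epsilon> > 0"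
    have "dist (P y j) (P x j) < \<epsilon>" if "y \<in> I" "dist y x < min e \<epsilon>" for y
      using lipschitz[of y] that by (simp add: dist_real_def)
    thus "\<exists>\<delta>>0. \<forall>y\<in>I. dist y x < \<delta> \<longrightarrow> dist (P y j) (P x j) < \<epsilon>"
      using e \<open>\<epsilon> > 0\<close> by (intro exI[of _ "min e \<epsilon>"]) auto
  qed
qed

lemma differentiable_near_if_affine_sides:
  fixes P :: "real \<Rightarrow> nat \<Rightarrow> real"
  assumes "e > 0"
    and L: "\<forall>y\<in>I. q - e < y \<and> y \<le> q \<longrightarrow> (\<forall>j\<in>{1..n}. P y j = P q j + \<alpha> j * (y - q))"
    and R: "\<forall>y\<in>I. q \<le> y \<and> y < q + e \<longrightarrow> (\<forall>j\<in>{1..n}. P y j = P q j + \<beta> j * (y - q))"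
    and x: "x \<in> interior I" "x \<noteq> q" "\<bar>x - q\<bar> < e"
  shows "\<forall>j\<in>{1..n}. (\<lambda>t. P t j) differentiable (at x)"
proof
  fix j assume j: "j \<in> {1..n}"
  have "interior I \<subseteq> I" by (rule interior_subset)
  consider "x < q" | "x > q" using x by linarith
  hence "\<exists>s. ((\<lambda>t. P t j) has_real_derivative s) (at x)"
  proof cases
    case 1
    show ?thesis
      by (rule exI, rule has_real_derivative_if_affine_on_open[of "interior I \<inter> {q - e<..<q}"
            _ _ "P q j - \<alpha> j * q"]) (use x 1 L j \<open>interior I \<subseteq> I\<close> in \<open>auto simp: algebra_simps\<close>)
  next
    case 2
    show ?thesis
      by (rule exI, rule has_real_derivative_if_affine_on_open[of "interior I \<inter> {q<..<q + e}"
            _ _ "P q j - \<beta> j * q"]) (use x 2 R j \<open>interior I \<subseteq> I\<close> in \<open>auto simp: algebra_simps\<close>)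
  qed
  thus "(\<lambda>t. P t j) differentiable (at x)" unfolding real_differentiable_def .
qed

lemma nondiff_set_discrete_if_locally_unit_slopes:
  assumes I: "is_interval I" and loc: "\<forall>x\<in>I. locally_unit_slopes n I P x" and q: "q \<in> I"
  shows "\<exists>e>0. \<forall>x\<in>nondiff_set n I P. \<bar>x - q\<bar> < e \<longrightarrow> x = q"
proof -
  obtain e \<alpha> \<beta> where e: "e > 0"
    and L: "\<forall>y\<in>I. q - e < y \<and> y \<le> q \<longrightarrow> (\<forall>j\<in>{1..n}. P y j = P q j + \<alpha> j * (y - q))"
    and R: "\<forall>y\<in>I. q \<le> y \<and> y < q + e \<longrightarrow> (\<forall>j\<in>{1..n}. P y j = P q j + \<beta> j * (y - q))"
    by (rule locally_unit_slopesE[OF bspec[OF loc q]])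
  obtain e' where e': "e' > 0" "\<forall>y\<in>I. y \<noteq> q \<and> \<bar>y - q\<bar> < e' \<longrightarrow> y \<in> interior I"
    using interval_punctured_nhd_interior[OF I q] by blast
  have "x = q" if x: "x \<in> nondiff_set n I P" "\<bar>x - q\<bar> < min e e'" for x
  proof (rule ccontr)
    assume "x \<noteq> q"
    moreover have "x \<in> I" using x unfolding nondiff_set_def by auto
    ultimately have "x \<in> interior I" using e' x by auto
    hence "\<forall>j\<in>{1..n}. (\<lambda>t. P t j) differentiable (at x)"
      using differentiable_near_if_affine_sides[OF e L R] \<open>x \<noteq> q\<close> x by auto
    thus False using x \<open>x \<in> interior I\<close> unfolding nondiff_set_def by auto
  qed
  thus ?thesis using e e' by (intro exI[of _ "min e e'"]) auto
qed

lemma derivative_near_if_affine_sides: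
  fixes P :: "real \<Rightarrow> nat \<Rightarrow> real"
  assumes x: "x \<in> interior I" and e: "e > 0"
    and L: "\<forall>y\<in>I. x - e < y \<and> y \<le> x \<longrightarrow> (\<forall>j\<in>{1..n}. P y j = P x j + \<alpha> j * (y - x))"
    and R: "\<forall>y\<in>I. x \<le> y \<and> y < x + e \<longrightarrow> (\<forall>j\<in>{1..n}. P y j = P x j + \<beta> j * (y - x))"
    and d: "\<forall>j\<in>{1..n}. (\<lambda>t. P t j) differentiable (at x)"
  shows "\<exists>e'>0. \<forall>y. \<bar>y - x\<bar> < e' \<longrightarrow> (\<forall>j\<in>{1..n}. ((\<lambda>t. P t j) has_real_derivative \<alpha> j) (at y))"
proof -
  obtain r where r: "r > 0" "ball x r \<subseteq> I" using x by (meson mem_interior)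
  define e' where "e' = min e r"
  have e': "e' > 0" using r e unfolding e'_def by simp
  have inI: "y \<in> I" if "y \<in> ball x e'" for y
    using r(2) that unfolding e'_def by auto
  have Lj: "P y j = P x j + \<alpha> j * (y - x)" if "y \<in> ball x e'" "y \<le> x" "j \<in> {1..n}" for y j
    using L inI[OF that(1)] that unfolding e'_def by (auto simp: dist_real_def)
  have Rj: "P y j = P x j + \<beta> j * (y - x)" if "y \<in> ball x e'" "x \<le> y" "j \<in> {1..n}" for y j
    using R inI[OF that(1)] that unfolding e'_def by (auto simp: dist_real_def)
  have "\<alpha> j = \<beta> j" if j: "j \<in> {1..n}" for j
  proof -
    obtain D where D: "((\<lambda>t. P t j) has_real_derivative D) (at x)"
      using d j unfolding real_differentiable_def by blast
    have "((\<lambda>t. P t j) has_real_derivative \<alpha> j) (at_left x)"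
      by (rule has_real_derivative_at_left_if_affine[OF e'], rule Lj) (use j in \<open>auto simp: dist_real_def\<close>)
    hence "D = \<alpha> j" by (rule has_field_derivative_unique[OF has_field_derivative_at_within[OF D]]) simp
    moreover have "((\<lambda>t. P t j) has_real_derivative \<beta> j) (at_right x)"
      by (rule has_real_derivative_at_right_if_affine[OF e'], rule Rj) (use j in \<open>auto simp: dist_real_def\<close>)
    hence "D = \<beta> j" by (rule has_field_derivative_unique[OF has_field_derivative_at_within[OF D]]) simp
    ultimately show ?thesis by simp
  qed
  hence "P y j = P x j - \<alpha> j * x + \<alpha> j * y" if "y \<in> ball x e'" "j \<in> {1..n}" for y j
    using Lj[OF that(1) _ that(2)] Rj[OF that(1) _ that(2)] that(2) by (cases "y \<le> x") (auto simp: algebra_simps)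
  hence "((\<lambda>t. P t j) has_real_derivative \<alpha> j) (at y)" if "y \<in> ball x e'" "j \<in> {1..n}" for y j
    using that by (intro has_real_derivative_if_affine_on_open[of "ball x e'"]) auto
  thus ?thesis using e' by (intro exI[of _ e']) (auto simp: dist_real_def abs_minus_commute)
qed

text \<open>At a point of differentiability all one-sided slopes agree, and the sum condition of (S1)
  forces exactly one of them to be 1.\<close>

lemma unit_derivative_near_if_locally_unit_slopes:
  fixes P :: "real \<Rightarrow> nat \<Rightarrow> real"
  assumes S: "sys_cond1 n I P" and loc: "locally_unit_slopes n I P y"
    and y: "y \<in> interior I" and d: "\<forall>j\<in>{1..n}. (\<lambda>t. P t j) differentiable (at y)"
  shows "\<exists>r\<in>{1..n}. \<exists>e>0. \<forall>z. \<bar>z - y\<bar> < e \<longrightarrow>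
            (\<forall>j\<in>{1..n}. ((\<lambda>t. P t j) has_real_derivative (if j = r then 1 else 0)) (at z))"
proof -
  obtain e \<alpha> \<beta> where e: "e > 0" and ab: "\<forall>j\<in>{1..n}. \<alpha> j \<in> {0,1} \<and> \<beta> j \<in> {0,1}"
    and L: "\<forall>z\<in>I. y - e < z \<and> z \<le> y \<longrightarrow> (\<forall>j\<in>{1..n}. P z j = P y j + \<alpha> j * (z - y))"
    and R: "\<forall>z\<in>I. y \<le> z \<and> z < y + e \<longrightarrow> (\<forall>j\<in>{1..n}. P z j = P y j + \<beta> j * (z - y))"
    using loc by (rule locally_unit_slopesE)
  obtain e' where e': "e' > 0" and der: "\<forall>z. \<bar>z - y\<bar> < e' \<longrightarrow>
      (\<forall>j\<in>{1..n}. ((\<lambda>t. P t j) has_real_derivative \<alpha> j) (at z))"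
    using derivative_near_if_affine_sides[OF y e L R d] by blast
  have "((\<lambda>t. \<Sum>j=1..n. P t j) has_real_derivative (\<Sum>j=1..n. \<alpha> j)) (at y)"
    using der e' by (intro DERIV_sum) auto
  moreover have "((\<lambda>t. \<Sum>j=1..n. P t j) has_real_derivative 1) (at y)"
    by (rule has_real_derivative_if_affine_on_open[of "interior I" _ _ 0])
      (use y S interior_subset in \<open>auto simp: sys_cond1_def\<close>)
  ultimately have "(\<Sum>j=1..n. \<alpha> j) = 1" using DERIV_unique by blast
  then obtain r where "r \<in> {1..n}" "\<forall>j\<in>{1..n}. \<alpha> j = (if j = r then 1 else 0)"
    using indicator_if_01_sum_1[of n \<alpha>] ab by blast
  thus ?thesis using e' der by (intro bexI[of _ r] exI[of _ e']) auto
qed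

lemma deriv_locally_constant_if_locally_unit_slopes:
  assumes S: "sys_cond1 n I P" and loc: "\<forall>x\<in>I. locally_unit_slopes n I P x"
    and q: "q \<in> I - nondiff_set n I P"
  shows "\<exists>e>0. \<forall>x\<in>I - nondiff_set n I P. \<bar>x - q\<bar> < e \<longrightarrow>
           (\<forall>j\<in>{1..n}. deriv (\<lambda>t. P t j) x = deriv (\<lambda>t. P t j) q)"
proof -
  have "q \<in> interior I" "\<forall>j\<in>{1..n}. (\<lambda>t. P t j) differentiable (at q)"
    using q unfolding nondiff_set_def by auto
  then obtain r e where "e > 0" and der: "\<forall>z. \<bar>z - q\<bar> < e \<longrightarrow>
      (\<forall>j\<in>{1..n}. ((\<lambda>t. P t j) has_real_derivative (if j = r then 1 else 0)) (at z))"
    using unit_derivative_near_if_locally_unit_slopes[OF S] loc q by blast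
  hence "deriv (\<lambda>t. P t j) x = (if j = r then 1 else 0)"
    if "\<bar>x - q\<bar> < e" "j \<in> {1..n}" for x j
    using that by (intro DERIV_imp_deriv) blast
  hence "deriv (\<lambda>t. P t j) x = deriv (\<lambda>t. P t j) q"
    if "\<bar>x - q\<bar> < e" "j \<in> {1..n}" for x j
    using that \<open>e > 0\<close> by simp
  thus ?thesis using \<open>e > 0\<close> by blast
qed

lemma unit_derivative_on_diff_subinterval:
  assumes S: "sys_cond1 n I P" and loc: "\<forall>x\<in>I. locally_unit_slopes n I P x"
    and H: "diff_subinterval n I P H"
  shows "\<exists>r\<in>{1..n}. \<forall>x\<in>H. \<forall>j\<in>{1..n}.
           ((\<lambda>t. P t j) has_real_derivative (if j = r then 1 else 0)) (at x)"
proof -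
  let ?moving = "\<lambda>y r. r \<in> {1..n} \<and> (\<exists>e>0. \<forall>z. \<bar>z - y\<bar> < e \<longrightarrow>
      (\<forall>j\<in>{1..n}. ((\<lambda>t. P t j) has_real_derivative (if j = r then 1 else 0)) (at z)))"
  define Rf where "Rf y = (SOME r. ?moving y r)" for y
  have "H \<subseteq> interior I" using H unfolding diff_subinterval_def by (intro interior_maximal) auto
  have "?moving y (Rf y)" if y: "y \<in> H" for y
  proof -
    have "y \<in> interior I" "locally_unit_slopes n I P y"
      "\<forall>j\<in>{1..n}. (\<lambda>t. P t j) differentiable (at y)"
      using H y \<open>H \<subseteq> interior I\<close> loc interior_subset unfolding diff_subinterval_def by blast+
    hence "\<exists>r. ?moving y r" using unit_derivative_near_if_locally_unit_slopes[OF S] by blast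
    thus ?thesis unfolding Rf_def by (rule someI_ex)
  qed
  then obtain e where e: "\<And>y. y \<in> H \<Longrightarrow> e y > 0 \<and> Rf y \<in> {1..n} \<and> (\<forall>z. \<bar>z - y\<bar> < e y \<longrightarrow>
      (\<forall>j\<in>{1..n}. ((\<lambda>t. P t j) has_real_derivative (if j = Rf y then 1 else 0)) (at z)))"
    by metis
  have loc_const: "\<forall>a\<in>H. eventually (\<lambda>b. Rf a = Rf b) (at a within H)"
  proof
    fix a assume a: "a \<in> H"
    show "eventually (\<lambda>b. Rf a = Rf b) (at a within H)"
    unfolding eventually_at
  proof (intro exI[of _ "e a"] conjI ballI impI)
    fix b assume b: "b \<in> H" "b \<noteq> a \<and> dist b a < e a"
    have "\<bar>b - b\<bar> < e b" "\<bar>b - a\<bar> < e a" using e[OF b(1)] b by (auto simp: dist_real_def)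
    moreover have "Rf b \<in> {1..n}" using e[OF b(1)] by blast
    ultimately have "((\<lambda>t. P t (Rf b)) has_real_derivative (if Rf b = Rf b then 1 else 0)) (at b)"
      "((\<lambda>t. P t (Rf b)) has_real_derivative (if Rf b = Rf a then 1 else 0)) (at b)"
      using e[OF b(1)] e[OF a] by blast+
    hence "(if Rf b = Rf b then 1 else 0) = (if Rf b = Rf a then 1 else (0::real))"
      by (rule DERIV_unique)
    thus "Rf a = Rf b" by (auto split: if_splits)
  qed (use e a in blast)
  qed
  have "connected H" using H unfolding diff_subinterval_def by (simp add: is_interval_connected)
  obtain y0 where y0: "y0 \<in> H" using H unfolding diff_subinterval_def by auto
  have same: "Rf y0 = Rf x" if "x \<in> H" for x
    by (rule connected_local_const[OF \<open>connected H\<close> y0 that loc_const])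
  have at_self: "\<forall>j\<in>{1..n}. ((\<lambda>t. P t j) has_real_derivative (if j = Rf x then 1 else 0)) (at x)"
    if x: "x \<in> H" for x
  proof -
    have "\<bar>x - x\<bar> < e x" using e[OF x] by simp
    thus ?thesis using e[OF x] by blast
  qed
  show ?thesis
  proof (intro bexI[of _ "Rf y0"] ballI)
    show "Rf y0 \<in> {1..n}" using e[OF y0] by blast
    fix x j assume "x \<in> H" "j \<in> {1..n}"
    thus "((\<lambda>t. P t j) has_real_derivative (if j = Rf y0 then 1 else 0)) (at x)"
      using at_self[of x] same[of x] by simp
  qed
qed

lemma S3_if_locally_unit_slopes:
  assumes loc: "\<forall>x\<in>I. locally_unit_slopes n I P x"
    and q: "q \<in> interior I" and r: "r \<in> {1..n}" and s: "s \<in> {1..n}" and "r < s"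
    and left: "((\<lambda>t. P t r) has_real_derivative 1) (at_left q)"
    and right: "((\<lambda>t. P t s) has_real_derivative 1) (at_right q)"
  shows "\<forall>j\<in>{r..s}. P q j = P q r"
proof -
  have "q \<in> I" using q interior_subset by blast
  obtain e \<alpha> \<beta> where e: "e > 0"
    and L: "\<forall>z\<in>I. q - e < z \<and> z \<le> q \<longrightarrow> (\<forall>j\<in>{1..n}. P z j = P q j + \<alpha> j * (z - q))"
    and R: "\<forall>z\<in>I. q \<le> z \<and> z < q + e \<longrightarrow> (\<forall>j\<in>{1..n}. P z j = P q j + \<beta> j * (z - q))"
    and S3: "q \<in> interior I \<longrightarrow> (\<forall>a\<in>{1..n}. \<forall>b\<in>{1..n}. \<alpha> a = 1 \<and> \<beta> b = 1 \<and> a < b \<longrightarrow>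
        (\<forall>j\<in>{a..b}. P q j = P q a))"
    by (rule locally_unit_slopesE[OF bspec[OF loc \<open>q \<in> I\<close>]])
  obtain \<rho> where \<rho>: "\<rho> > 0" "ball q \<rho> \<subseteq> I" using q by (meson mem_interior)
  define e' where "e' = min e \<rho>"
  have e': "e' > 0" using e \<rho> unfolding e'_def by simp
  have inI: "z \<in> I" if "\<bar>z - q\<bar> < e'" for z
    using \<rho>(2) that unfolding e'_def by (auto simp: dist_real_def abs_minus_commute)
  have "((\<lambda>t. P t r) has_real_derivative \<alpha> r) (at_left q)"
  proof (rule has_real_derivative_at_left_if_affine[OF e'])
    fix y assume y: "q - e' < y" "y < q"
    hence "\<bar>y - q\<bar> < e'" by simp
    hence "y \<in> I" "q - e < y" using inI[of y] y unfolding e'_def by auto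
    thus "P y r = P q r + \<alpha> r * (y - q)" using L y r by auto
  qed
  hence "\<alpha> r = 1" using has_field_derivative_unique[OF _ left] by simp
  moreover have "((\<lambda>t. P t s) has_real_derivative \<beta> s) (at_right q)"
  proof (rule has_real_derivative_at_right_if_affine[OF e'])
    fix y assume y: "q < y" "y < q + e'"
    hence "\<bar>y - q\<bar> < e'" by simp
    hence "y \<in> I" "y < q + e" using inI[of y] y unfolding e'_def by auto
    thus "P y s = P q s + \<beta> s * (y - q)" using R y s by auto
  qed
  hence "\<beta> s = 1" using has_field_derivative_unique[OF _ right] by simp
  ultimately show ?thesis using S3 q r s \<open>r < s\<close> by blast
qed

theorem n_system_if_locally_unit_slopes:
  assumes "is_interval I" and S: "sys_cond1 n I P" and loc: "\<forall>x\<in>I. locally_unit_slopes n I P x"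
  shows "n_system n I P"
  unfolding n_system_def cont_piecewise_linear_def
proof (intro conjI ballI allI impI)
  show "continuous_on I (\<lambda>t. P t j)" if "j \<in> {1..n}" for j
    using continuous_on_if_locally_unit_slopes[OF loc that] .
  show "\<exists>e>0. \<forall>x\<in>nondiff_set n I P. \<bar>x - q\<bar> < e \<longrightarrow> x = q" if "q \<in> I" for q
    using nondiff_set_discrete_if_locally_unit_slopes[OF assms(1) loc that] .
  show "\<exists>e>0. \<forall>x\<in>I - nondiff_set n I P. \<bar>x - q\<bar> < e \<longrightarrow>
      (\<forall>j\<in>{1..n}. deriv (\<lambda>t. P t j) x = deriv (\<lambda>t. P t j) q)" if "q \<in> I - nondiff_set n I P" for q
    using deriv_locally_constant_if_locally_unit_slopes[OF S loc that] .
  show "sys_cond1 n I P" by (rule S)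
  show "\<exists>r\<in>{1..n}. \<forall>x\<in>H. \<forall>j\<in>{1..n}.
      ((\<lambda>t. P t j) has_real_derivative (if j = r then 1 else 0)) (at x)" if "diff_subinterval n I P H" for H
    using unit_derivative_on_diff_subinterval[OF S loc that] .
  fix q r s j
  assume "q \<in> interior I \<inter> nondiff_set n I P" "r \<in> {1..n}" "s \<in> {1..n}"
    and d: "((\<lambda>t. P t r) has_real_derivative 1) (at_left q) \<and>
      ((\<lambda>t. P t s) has_real_derivative 1) (at_right q) \<and> r < s" and "j \<in> {r..s}"
  thus "P q j = P q r" using S3_if_locally_unit_slopes[OF loc, of q r s] by blast
qed

section \<open>The ramp function\<close>

definition ramp :: "real \<Rightarrow> real \<Rightarrow> real" where
  "ramp k w = of_int \<lfloor>w\<rfloor> + min 1 (k * frac w)"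

lemma floor_eq_right:
  fixes v w :: real
  assumes "w \<le> v" "v < w + (1 - frac w)"
  shows "\<lfloor>v\<rfloor> = \<lfloor>w\<rfloor>" and "frac v = frac w + (v - w)"
proof -
  have "of_int \<lfloor>w\<rfloor> \<le> v" "v < of_int \<lfloor>w\<rfloor> + 1"
    using assms of_int_floor_le[of w] unfolding frac_def by linarith+
  thus "\<lfloor>v\<rfloor> = \<lfloor>w\<rfloor>" by (intro floor_unique)
  thus "frac v = frac w + (v - w)" by (simp add: frac_def)
qed

lemma floor_eq_left:
  fixes v w :: real
  assumes "w - frac w \<le> v" "v \<le> w"
  shows "\<lfloor>v\<rfloor> = \<lfloor>w\<rfloor>" and "frac v = frac w + (v - w)"
proof -
  show "\<lfloor>v\<rfloor> = \<lfloor>w\<rfloor>" using assms frac_lt_1[of w] by (intro floor_unique) (auto simp: frac_def)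
  thus "frac v = frac w + (v - w)" by (simp add: frac_def)
qed

lemma ramp_right_affine:
  assumes k: "k \<ge> 1"
  shows "\<exists>\<eta>>0. \<forall>v. w \<le> v \<and> v \<le> w + \<eta> \<longrightarrow>
           ramp k v = ramp k w + (if frac w < 1/k then k else 0) * (v - w)"
proof (cases "frac w < 1/k")
  case True
  define a where "a = 1/k"
  have "a \<le> 1" "frac w < a" "k * a = 1" using k True unfolding a_def by simp_all
  have "ramp k v = ramp k w + (if frac w < 1/k then k else 0) * (v - w)"
    if v: "w \<le> v \<and> v \<le> w + (a - frac w)/2" for v
  proof -
    have "v < w + (1 - frac w)" using v \<open>a \<le> 1\<close> \<open>frac w < a\<close> frac_ge_0[of w] by argo
    note fv = floor_eq_right[OF conjunct1[OF v] this]
    have "frac v \<le> a" using fv(2) v \<open>frac w < a\<close> by argo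
    hence "k * frac v \<le> k * a" "k * frac w \<le> k * a"
      using \<open>frac w < a\<close> k by (simp_all add: mult_left_mono)
    hence "k * frac v \<le> 1" "k * frac w \<le> 1" using \<open>k * a = 1\<close> by simp_all
    thus ?thesis unfolding ramp_def fv using True by (simp add: algebra_simps)
  qed
  moreover have "(a - frac w)/2 > 0" using \<open>frac w < a\<close> by simp
  ultimately show ?thesis by blast
next
  case False
  have "ramp k v = ramp k w + (if frac w < 1/k then k else 0) * (v - w)"
    if v: "w \<le> v \<and> v \<le> w + (1 - frac w)/2" for v
  proof -
    have "v < w + (1 - frac w)" using v frac_lt_1[of w] by argo
    note fv = floor_eq_right[OF conjunct1[OF v] this]
    have "1 \<le> k * frac w" using False k by (simp add: field_simps)
    moreover have "k * frac w \<le> k * frac v" using fv(2) v k by simp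
    ultimately show ?thesis unfolding ramp_def fv(1) using False by simp
  qed
  moreover have "(1 - frac w)/2 > 0" using frac_lt_1[of w] by simp
  ultimately show ?thesis by blast
qed

lemma ramp_left_affine:
  assumes k: "k \<ge> 2"
  shows "\<exists>\<eta>>0. \<forall>v. w - \<eta> \<le> v \<and> v \<le> w \<longrightarrow>
           ramp k v = ramp k w + (if 0 < frac w \<and> frac w \<le> 1/k then k else 0) * (v - w)"
proof -
  define a where "a = 1/k"
  have "0 < a" "a \<le> 1/2" "k * a = 1" using k unfolding a_def by (simp_all add: divide_simps)
  consider "frac w = 0" | "0 < frac w" "frac w \<le> a" | "a < frac w"
    using frac_ge_0[of w] by argo
  thus ?thesis
  proof cases
    case 1
    text \<open>Just below an integer the ramp has already reached its top, because $k > 1$.\<close>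
    have "ramp k v = ramp k w + (if 0 < frac w \<and> frac w \<le> 1/k then k else 0) * (v - w)"
      if v: "w - (1 - a)/2 \<le> v \<and> v \<le> w" for v
    proof (cases "v = w")
      case False
      have w: "w = of_int \<lfloor>w\<rfloor>" using 1 by (simp add: frac_def)
      have "v < w" using v False by simp
      hence "of_int \<lfloor>w\<rfloor> - 1 \<le> v" "v < of_int \<lfloor>w\<rfloor>" using v w \<open>0 < a\<close> by argo+
      hence fl: "\<lfloor>v\<rfloor> = \<lfloor>w\<rfloor> - 1" by (intro floor_unique) auto
      have "a \<le> frac v" using v w \<open>a \<le> 1/2\<close> unfolding frac_def fl by simp argo
      hence "k * a \<le> k * frac v" using k by (simp add: mult_left_mono)
      thus ?thesis unfolding ramp_def fl 1 using \<open>k * a = 1\<close> by simp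
    qed simp
    moreover have "(1 - a)/2 > 0" using \<open>a \<le> 1/2\<close> by simp
    ultimately show ?thesis by blast
  next
    case 2
    have "ramp k v = ramp k w + (if 0 < frac w \<and> frac w \<le> 1/k then k else 0) * (v - w)"
      if v: "w - frac w/2 \<le> v \<and> v \<le> w" for v
    proof -
      have "w - frac w \<le> v" using v 2 by argo
      note fv = floor_eq_left[OF this conjunct2[OF v]]
      have "frac v \<le> a" using fv(2) v 2 by argo
      hence "k * frac v \<le> k * a" "k * frac w \<le> k * a" using 2 k by (simp_all add: mult_left_mono)
      hence "k * frac v \<le> 1" "k * frac w \<le> 1" using \<open>k * a = 1\<close> by simp_all
      moreover have "(if 0 < frac w \<and> frac w \<le> 1/k then k else 0) = k" using 2 unfolding a_def by simp
      ultimately show ?thesis unfolding ramp_def fv by (simp add: algebra_simps)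
    qed
    moreover have "frac w/2 > 0" using 2 by simp
    ultimately show ?thesis by blast
  next
    case 3
    have "ramp k v = ramp k w + (if 0 < frac w \<and> frac w \<le> 1/k then k else 0) * (v - w)"
      if v: "w - (frac w - a)/2 \<le> v \<and> v \<le> w" for v
    proof -
      have "w - frac w \<le> v" using v 3 \<open>0 < a\<close> by argo
      note fv = floor_eq_left[OF this conjunct2[OF v]]
      have "a \<le> frac v" "a \<le> frac w" using fv(2) v 3 by argo+
      hence "k * a \<le> k * frac v" "k * a \<le> k * frac w" using k by (simp_all add: mult_left_mono)
      moreover have "(if 0 < frac w \<and> frac w \<le> 1/k then k else 0) = 0" using 3 unfolding a_def by simp
      ultimately show ?thesis unfolding ramp_def fv(1) using \<open>k * a = 1\<close> by simp
    qed
    moreover have "(frac w - a)/2 > 0" using 3 by simp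
    ultimately show ?thesis by blast
  qed
qed

lemma ramp_mono:
  assumes "k \<ge> 1" "v \<le> w"
  shows "ramp k v \<le> ramp k w"
proof (cases "\<lfloor>v\<rfloor> = \<lfloor>w\<rfloor>")
  case True
  hence "frac v \<le> frac w" using assms(2) by (simp add: frac_def)
  hence "k * frac v \<le> k * frac w" using assms(1) by (intro mult_left_mono) auto
  thus ?thesis unfolding ramp_def True by simp
next
  case False
  hence "\<lfloor>v\<rfloor> + 1 \<le> \<lfloor>w\<rfloor>" using floor_mono[OF assms(2)] by linarith
  moreover have "0 \<le> k * frac w" using assms(1) by simp
  ultimately show ?thesis unfolding ramp_def by linarith
qed

lemma ramp_bounds:
  assumes "k \<ge> 1"
  shows "w \<le> ramp k w" "ramp k w \<le> w + 1"
proof -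
  have "frac w \<le> k * frac w" using mult_right_mono[OF assms, of "frac w"] by simp
  hence "frac w \<le> min 1 (k * frac w)" using frac_lt_1[of w] by simp
  thus "w \<le> ramp k w" "ramp k w \<le> w + 1" unfolding ramp_def frac_def by linarith+
qed

lemma ramp_of_int_minus:
  fixes p :: nat
  assumes "k \<ge> 1" "real p \<le> k - 1"
  shows "ramp k (of_int N - real p / k) = of_int N"
proof (cases "p = 0")
  case False
  have "0 < real p / k" "real p / k < 1" using assms False by (auto simp: field_simps)
  hence fl: "\<lfloor>of_int N - real p / k\<rfloor> = N - 1" by (intro floor_unique) auto
  have "k * frac (of_int N - real p / k) = k - real p" using assms unfolding frac_def fl by (simp add: field_simps)
  thus ?thesis unfolding ramp_def fl using assms by simp
qed (simp add: ramp_def)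

lemma ramp_of_int [simp]: "ramp k (of_int N) = of_int N"
  by (simp add: ramp_def)

lemma ramp_shift_cases:
  fixes K :: nat and \<tau> :: real
  assumes K: "K \<ge> 1" and p: "p < K"
  defines "N \<equiv> \<lfloor>\<tau>\<rfloor>"
  defines "i \<equiv> nat \<lfloor>real K * (\<tau> - N)\<rfloor>"
  defines "g \<equiv> real K * (\<tau> - N) - i"
  shows "ramp K (\<tau> - p/K) = N + (if p < i then 1 else if p = i then g else 0)"
proof -
  have Kp: "real K > 0" using K by simp
  have f: "0 \<le> \<tau> - N" "\<tau> - N < 1" unfolding N_def by linarith+
  have "real K * (\<tau> - N) < real K" using f Kp by simp
  hence "\<lfloor>real K * (\<tau> - N)\<rfloor> < int K" by (simp add: floor_less_iff)
  hence iK: "i < K" unfolding i_def using K by (cases "\<lfloor>real K * (\<tau> - N)\<rfloor> < 0") (auto simp: nat_less_iff)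
  have g: "0 \<le> g" "g < 1" unfolding g_def i_def using f Kp by (auto simp: of_nat_nat; linarith)+
  have tau: "\<tau> - p/K = N + (real i - p + g)/K" unfolding g_def using Kp by (simp add: field_simps)
  show ?thesis
  proof (cases "p < i")
    case True
    have a: "1 \<le> real i - p + g" "real i - p + g < K" using True g iK by linarith+
    have fl: "\<lfloor>\<tau> - p/K\<rfloor> = N" unfolding tau using a Kp by (intro floor_unique) (auto simp: field_simps)
    have "K * (\<tau> - p/K - N) = real i - p + g" unfolding tau using Kp by (simp add: field_simps)
    thus ?thesis unfolding ramp_def frac_def fl using True a by simp
  next
    case False
    show ?thesis
    proof (cases "p = i")
      case True
      have fl: "\<lfloor>\<tau> - p/K\<rfloor> = N" unfolding tau using True g Kp by (intro floor_unique) (auto simp: field_simps)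
      have "K * (\<tau> - p/K - N) = K * ((real i - p + g)/K)" using tau by simp
      hence "K * (\<tau> - p/K - N) = g" using True Kp by simp
      thus ?thesis unfolding ramp_def frac_def fl using True g by simp
    next
      case False2: False
      have a: "real i - p + g < 0" "real i - p + g > - K" using False False2 g p by linarith+
      have fl: "\<lfloor>\<tau> - p/K\<rfloor> = N - 1" unfolding tau using a Kp by (intro floor_unique) (auto simp: field_simps)
      have "K * (\<tau> - p/K - (N - 1)) = K + (real i - p + g)" unfolding tau using Kp by (simp add: field_simps)
      moreover have "K + (real i - p + g) \<ge> 1" using p g by linarith
      ultimately show ?thesis unfolding ramp_def frac_def fl using False False2 by simp
    qed
  qed
qed

lemma ramp_shifts_sum:
  fixes K :: nat and \<tau> :: real
  assumes K: "K \<ge> 1"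
  shows "(\<Sum>p<K. ramp K (\<tau> - p/K)) = K * \<tau>"
proof -
  define N where "N = \<lfloor>\<tau>\<rfloor>"
  define i where "i = nat \<lfloor>real K * (\<tau> - N)\<rfloor>"
  define g where "g = real K * (\<tau> - N) - i"
  have Kp: "real K > 0" using K by simp
  have f: "0 \<le> \<tau> - N" "\<tau> - N < 1" unfolding N_def by linarith+
  have "real K * (\<tau> - N) < real K" using f Kp by simp
  hence "\<lfloor>real K * (\<tau> - N)\<rfloor> < int K" by (simp add: floor_less_iff)
  hence iK: "i < K" unfolding i_def using K by (cases "\<lfloor>real K * (\<tau> - N)\<rfloor> < 0") (auto simp: nat_less_iff)
  have "(\<Sum>p<K. ramp K (\<tau> - p/K)) = (\<Sum>p<K. N + ((if p < i then 1 else 0) + (if p = i then g else 0)))"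
    using ramp_shift_cases[OF K] unfolding N_def i_def g_def by (intro sum.cong) auto
  also have "\<dots> = K * N + (real (card {p. p < K \<and> p < i}) + g)"
    using iK by (simp add: sum.distrib sum.If_cases Int_def)
  also have "{p. p < K \<and> p < i} = {..<i}" using iK by auto
  finally show ?thesis by (simp add: g_def algebra_simps)
qed

section \<open>The staircase on a block\<close>

text \<open>On a block $r_l..r_h$ of $K$ coordinates that a generalized system moves jointly with slope
  $1/K$, the staircase started at time $c$ with step $\delta$ lets the coordinates move one at a time
  with slope 1: in each round of length $K\delta$ first $r_h$ moves, then $r_h - 1$, down to $r_l$.
  Coordinate $r_h - p$ runs the ramp with its phase shifted by $p/K$.\<close>

definition block_size :: "nat \<Rightarrow> nat \<Rightarrow> real" where
  "block_size rl rh = real (rh - rl + 1)"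

definition block_slope :: "nat \<Rightarrow> nat \<Rightarrow> nat \<Rightarrow> real" where
  "block_slope rl rh j = (if rl \<le> j \<and> j \<le> rh then 1 / block_size rl rh else 0)"

definition stair_phase :: "real \<Rightarrow> real \<Rightarrow> nat \<Rightarrow> nat \<Rightarrow> real \<Rightarrow> nat \<Rightarrow> real" where
  "stair_phase c \<delta> rl rh y j = (y - c) / (block_size rl rh * \<delta>) - real (rh - j) / block_size rl rh"

definition stair_offset :: "real \<Rightarrow> real \<Rightarrow> nat \<Rightarrow> nat \<Rightarrow> real \<Rightarrow> nat \<Rightarrow> real" where
  "stair_offset c \<delta> rl rh y j = (if rl \<le> j \<and> j \<le> rh \<and> rl < rh then
      \<delta> * (ramp (block_size rl rh) (stair_phase c \<delta> rl rh y j) - (y - c) / (block_size rl rh * \<delta>)) else 0)"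

definition stair :: "(nat \<Rightarrow> real) \<Rightarrow> real \<Rightarrow> real \<Rightarrow> nat \<Rightarrow> nat \<Rightarrow> real \<Rightarrow> nat \<Rightarrow> real" where
  "stair A c \<delta> rl rh y j = A j + block_slope rl rh j * y + stair_offset c \<delta> rl rh y j"

definition stair_slope_left :: "real \<Rightarrow> real \<Rightarrow> nat \<Rightarrow> nat \<Rightarrow> real \<Rightarrow> nat \<Rightarrow> real" where
  "stair_slope_left c \<delta> rl rh z j = (if rl \<le> j \<and> j \<le> rh then (if rl < rh then
      (if 0 < frac (stair_phase c \<delta> rl rh z j) \<and> frac (stair_phase c \<delta> rl rh z j) \<le> 1 / block_size rl rh
       then 1 else 0) else 1) else 0)"

definition stair_slope_right :: "real \<Rightarrow> real \<Rightarrow> nat \<Rightarrow> nat \<Rightarrow> real \<Rightarrow> nat \<Rightarrow> real" where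
  "stair_slope_right c \<delta> rl rh z j = (if rl \<le> j \<and> j \<le> rh then (if rl < rh then
      (if frac (stair_phase c \<delta> rl rh z j) < 1 / block_size rl rh then 1 else 0) else 1) else 0)"

lemma block_size_ge: "rl < rh \<Longrightarrow> block_size rl rh \<ge> 2" "block_size rl rh \<ge> 1"
  unfolding block_size_def by auto

lemma stair_phase_diff:
  "\<delta> > 0 \<Longrightarrow> stair_phase c \<delta> rl rh y j - stair_phase c \<delta> rl rh z j = (y - z) / (block_size rl rh * \<delta>)"
  unfolding stair_phase_def by (simp add: diff_divide_distrib[symmetric])

lemma stair_outside_block:
  assumes "\<not> (rl \<le> j \<and> j \<le> rh)"
  shows "stair A c \<delta> rl rh y j = A j" "stair_slope_left c \<delta> rl rh z j = 0"
    "stair_slope_right c \<delta> rl rh z j = 0"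
  using assms unfolding stair_def stair_offset_def block_slope_def stair_slope_left_def
    stair_slope_right_def by auto

lemma stair_singleton_block:
  assumes "rl = rh"
  shows "stair A c \<delta> rl rh y j = A j + (if j = rl then y else 0)"
    "stair_slope_left c \<delta> rl rh z j = (if j = rl then 1 else 0)"
    "stair_slope_right c \<delta> rl rh z j = (if j = rl then 1 else 0)"
  using assms unfolding stair_def stair_offset_def block_slope_def block_size_def
    stair_slope_left_def stair_slope_right_def by auto

lemma stair_in_block:
  assumes "\<delta> > 0" "rl \<le> j" "j \<le> rh" "rl < rh"
  shows "stair A c \<delta> rl rh y j = A j + c / block_size rl rh + \<delta> * ramp (block_size rl rh) (stair_phase c \<delta> rl rh y j)"
proof -
  have "block_size rl rh > 0" using block_size_ge(2)[of rl rh] by simp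
  thus ?thesis using assms unfolding stair_def stair_offset_def block_slope_def
    by (simp add: field_simps)
qed

lemma stair_slopes_01: "stair_slope_left c \<delta> rl rh z j \<in> {0,1}" "stair_slope_right c \<delta> rl rh z j \<in> {0,1}"
  unfolding stair_slope_left_def stair_slope_right_def by auto

lemma stair_right_affine_coord:
  assumes d: "\<delta> > 0"
  shows "\<exists>\<eta>>0. \<forall>y. z \<le> y \<and> y < z + \<eta> \<longrightarrow>
     stair A c \<delta> rl rh y j = stair A c \<delta> rl rh z j + stair_slope_right c \<delta> rl rh z j * (y - z)"
proof (cases "rl \<le> j \<and> j \<le> rh \<and> rl < rh")
  case False
  hence "\<not> (rl \<le> j \<and> j \<le> rh) \<or> rl = rh" by auto
  thus ?thesis
    by (elim disjE) (auto simp: stair_outside_block stair_singleton_block algebra_simps intro!: exI[of _ 1])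
next
  case True
  define K where "K = block_size rl rh"
  have "K \<ge> 2" using block_size_ge True unfolding K_def by auto
  let ?w = "stair_phase c \<delta> rl rh"
  define \<sigma> where "\<sigma> = (if frac (?w z j) < 1/K then K else 0)"
  obtain \<eta> where "\<eta> > 0" and ramp_eq: "\<forall>v. ?w z j \<le> v \<and> v \<le> ?w z j + \<eta> \<longrightarrow>
      ramp K v = ramp K (?w z j) + \<sigma> * (v - ?w z j)"
    using ramp_right_affine[of K "?w z j"] \<open>K \<ge> 2\<close> unfolding \<sigma>_def by auto
  have slope: "stair_slope_right c \<delta> rl rh z j = \<sigma> / K"
    using True \<open>K \<ge> 2\<close> unfolding stair_slope_right_def \<sigma>_def K_def by auto
  have "stair A c \<delta> rl rh y j = stair A c \<delta> rl rh z j + \<sigma> / K * (y - z)"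
    if y: "z \<le> y" "y < z + K * \<delta> * \<eta>" for y
  proof -
    have wd: "?w y j - ?w z j = (y - z) / (K * \<delta>)" using stair_phase_diff[OF d] unfolding K_def by simp
    moreover have "(y - z) / (K * \<delta>) \<le> \<eta>" "0 \<le> (y - z) / (K * \<delta>)"
      using y \<open>K \<ge> 2\<close> d by (simp_all add: field_simps)
    ultimately have "ramp K (?w y j) = ramp K (?w z j) + \<sigma> * ((y - z) / (K * \<delta>))"
      using ramp_eq[rule_format, of "?w y j"] by simp
    thus ?thesis using stair_in_block[OF d _ _ conjunct2[OF conjunct2[OF True]]] True d \<open>K \<ge> 2\<close>
      unfolding K_def by (simp add: field_simps)
  qed
  moreover have "K * \<delta> * \<eta> > 0" using \<open>\<eta> > 0\<close> d \<open>K \<ge> 2\<close> by simp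
  ultimately show ?thesis unfolding slope by blast
qed

lemma stair_left_affine_coord:
  assumes d: "\<delta> > 0"
  shows "\<exists>\<eta>>0. \<forall>y. z - \<eta> < y \<and> y \<le> z \<longrightarrow>
     stair A c \<delta> rl rh y j = stair A c \<delta> rl rh z j + stair_slope_left c \<delta> rl rh z j * (y - z)"
proof (cases "rl \<le> j \<and> j \<le> rh \<and> rl < rh")
  case False
  hence "\<not> (rl \<le> j \<and> j \<le> rh) \<or> rl = rh" by auto
  thus ?thesis
    by (elim disjE) (auto simp: stair_outside_block stair_singleton_block algebra_simps intro!: exI[of _ 1])
next
  case True
  define K where "K = block_size rl rh"
  have "K \<ge> 2" using block_size_ge True unfolding K_def by auto
  let ?w = "stair_phase c \<delta> rl rh"
  define \<sigma> where "\<sigma> = (if 0 < frac (?w z j) \<and> frac (?w z j) \<le> 1/K then K else 0)"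
  obtain \<eta> where "\<eta> > 0" and ramp_eq: "\<forall>v. ?w z j - \<eta> \<le> v \<and> v \<le> ?w z j \<longrightarrow>
      ramp K v = ramp K (?w z j) + \<sigma> * (v - ?w z j)"
    using ramp_left_affine[of K "?w z j"] \<open>K \<ge> 2\<close> unfolding \<sigma>_def by auto
  have slope: "stair_slope_left c \<delta> rl rh z j = \<sigma> / K"
    using True \<open>K \<ge> 2\<close> unfolding stair_slope_left_def \<sigma>_def K_def by auto
  have "stair A c \<delta> rl rh y j = stair A c \<delta> rl rh z j + \<sigma> / K * (y - z)"
    if y: "z - K * \<delta> * \<eta> < y" "y \<le> z" for y
  proof -
    have wd: "?w y j - ?w z j = (y - z) / (K * \<delta>)" using stair_phase_diff[OF d] unfolding K_def by simp
    moreover have "- \<eta> \<le> (y - z) / (K * \<delta>)" "(y - z) / (K * \<delta>) \<le> 0"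
      using y \<open>K \<ge> 2\<close> d by (simp_all add: field_simps)
    ultimately have "ramp K (?w y j) = ramp K (?w z j) + \<sigma> * ((y - z) / (K * \<delta>))"
      using ramp_eq[rule_format, of "?w y j"] by simp
    thus ?thesis using stair_in_block[OF d _ _ conjunct2[OF conjunct2[OF True]]] True d \<open>K \<ge> 2\<close>
      unfolding K_def by (simp add: field_simps)
  qed
  moreover have "K * \<delta> * \<eta> > 0" using \<open>\<eta> > 0\<close> d \<open>K \<ge> 2\<close> by simp
  ultimately show ?thesis unfolding slope by blast
qed

lemma common_radius_finite:
  fixes R :: "'a \<Rightarrow> real \<Rightarrow> bool"
  assumes "finite J" and "\<And>j. j \<in> J \<Longrightarrow> \<exists>\<eta>>0. R j \<eta>"
    and mono: "\<And>j \<eta> \<eta>'. R j \<eta> \<Longrightarrow> 0 < \<eta>' \<Longrightarrow> \<eta>' \<le> \<eta> \<Longrightarrow> R j \<eta>'"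
  shows "\<exists>\<eta>>0. \<forall>j\<in>J. R j \<eta>"
  using assms(1,2)
proof (induction J rule: finite_induct)
  case empty
  show ?case by (intro exI[of _ 1]) simp
next
  case (insert x F)
  obtain \<eta>1 \<eta>2 where "\<eta>1 > 0" "\<forall>j\<in>F. R j \<eta>1" "\<eta>2 > 0" "R x \<eta>2"
    using insert by blast
  thus ?case using mono by (intro exI[of _ "min \<eta>1 \<eta>2"]) auto
qed

lemma stair_right_affine:
  assumes "\<delta> > 0"
  shows "\<exists>\<eta>>0. \<forall>y. z \<le> y \<and> y < z + \<eta> \<longrightarrow>
     (\<forall>j. stair A c \<delta> rl rh y j = stair A c \<delta> rl rh z j + stair_slope_right c \<delta> rl rh z j * (y - z))"
proof -
  define Q where "Q j y \<longleftrightarrow>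
    stair A c \<delta> rl rh y j = stair A c \<delta> rl rh z j + stair_slope_right c \<delta> rl rh z j * (y - z)" for j y
  have "\<exists>\<eta>>0. \<forall>j\<in>{rl..rh}. \<forall>y. z \<le> y \<and> y < z + \<eta> \<longrightarrow> Q j y"
  proof (rule common_radius_finite)
    show "\<exists>\<eta>>0. \<forall>y. z \<le> y \<and> y < z + \<eta> \<longrightarrow> Q j y" for j
      unfolding Q_def by (rule stair_right_affine_coord[OF assms])
  qed auto
  moreover have "Q j y" if "j \<notin> {rl..rh}" for j y
    using that unfolding Q_def by (simp add: stair_outside_block)
  ultimately have "\<exists>\<eta>>0. \<forall>y. z \<le> y \<and> y < z + \<eta> \<longrightarrow> (\<forall>j. Q j y)" by blast
  thus ?thesis unfolding Q_def .
qed

lemma stair_left_affine: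
  assumes "\<delta> > 0"
  shows "\<exists>\<eta>>0. \<forall>y. z - \<eta> < y \<and> y \<le> z \<longrightarrow>
     (\<forall>j. stair A c \<delta> rl rh y j = stair A c \<delta> rl rh z j + stair_slope_left c \<delta> rl rh z j * (y - z))"
proof -
  define Q where "Q j y \<longleftrightarrow>
    stair A c \<delta> rl rh y j = stair A c \<delta> rl rh z j + stair_slope_left c \<delta> rl rh z j * (y - z)" for j y
  have "\<exists>\<eta>>0. \<forall>j\<in>{rl..rh}. \<forall>y. z - \<eta> < y \<and> y \<le> z \<longrightarrow> Q j y"
  proof (rule common_radius_finite)
    show "\<exists>\<eta>>0. \<forall>y. z - \<eta> < y \<and> y \<le> z \<longrightarrow> Q j y" for j
      unfolding Q_def by (rule stair_left_affine_coord[OF assms])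
  qed auto
  moreover have "Q j y" if "j \<notin> {rl..rh}" for j y
    using that unfolding Q_def by (simp add: stair_outside_block)
  ultimately have "\<exists>\<eta>>0. \<forall>y. z - \<eta> < y \<and> y \<le> z \<longrightarrow> (\<forall>j. Q j y)" by blast
  thus ?thesis unfolding Q_def .
qed

lemma frac_of_int_minus:
  fixes K p :: real
  assumes "0 < p" "p < K"
  shows "frac (of_int N - p / K) = 1 - p / K"
proof -
  have "0 < p/K" "p/K < 1" using assms by (auto simp: field_simps)
  hence "\<lfloor>of_int N - p/K\<rfloor> = N - 1" by (intro floor_unique) auto
  thus ?thesis unfolding frac_def by simp
qed

lemma stair_at_full_rounds:
  assumes d: "\<delta> > 0" and r: "rl \<le> rh" and m: "\<delta> * block_size rl rh * real m = y - c"
  shows "stair A c \<delta> rl rh y j = A j + block_slope rl rh j * y"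
    "stair_slope_left c \<delta> rl rh y j = (if j = rl then 1 else 0)"
    "stair_slope_right c \<delta> rl rh y j = (if j = rh then 1 else 0)"
proof -
  define K where "K = block_size rl rh"
  have K1: "K \<ge> 1" unfolding K_def by (rule block_size_ge)
  have "(y - c) / (K * \<delta>) = real m"
    using d K1 unfolding m[symmetric] K_def[symmetric] by (simp add: field_simps)
  hence phase: "stair_phase c \<delta> rl rh y j = of_int (int m) - real (rh - j) / K"
    unfolding stair_phase_def K_def[symmetric] by simp
  have pK: "real (rh - j) \<le> K - 1" if "rl \<le> j" using that r unfolding K_def block_size_def by auto
  show "stair A c \<delta> rl rh y j = A j + block_slope rl rh j * y"
    using ramp_of_int_minus[OF K1 pK, of "int m"] m d K1
    unfolding stair_def stair_offset_def phase K_def[symmetric] by (auto simp: field_simps)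
  show "stair_slope_left c \<delta> rl rh y j = (if j = rl then 1 else 0)"
   "stair_slope_right c \<delta> rl rh y j = (if j = rh then 1 else 0)"
  proof -
    consider "\<not> (rl \<le> j \<and> j \<le> rh)" | "rl = rh" | "rl \<le> j" "j \<le> rh" "rl < rh" by linarith
    hence "stair_slope_left c \<delta> rl rh y j = (if j = rl then 1 else 0) \<and>
      stair_slope_right c \<delta> rl rh y j = (if j = rh then 1 else 0)"
    proof cases
      case 1 thus ?thesis using r by (auto simp: stair_outside_block)
    next
      case 2 thus ?thesis by (simp add: stair_singleton_block)
    next
      case 3
      have K: "K = real (rh - rl) + 1" unfolding K_def block_size_def using 3 by simp
      show ?thesis
      proof (cases "j = rh")
        case True
        have "frac (of_int (int m) :: real) = 0" by (rule frac_of_int)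
        hence "frac (real m) < 1 / K" using K1 by (simp del: frac_eq_0_iff)
        thus ?thesis using True 3 K1 unfolding stair_slope_left_def stair_slope_right_def phase
          K_def[symmetric] by auto
      next
        case False
        have fr: "frac (stair_phase c \<delta> rl rh y j) = 1 - real (rh - j) / K"
          unfolding phase using 3 False pK by (intro frac_of_int_minus) auto
        have "1 - real (rh - j) / K \<ge> 1 / K" using pK 3 K1 by (simp add: field_simps)
        moreover have "(1 - real (rh - j) / K \<le> 1 / K) \<longleftrightarrow> (K - real (rh - j)) / K \<le> 1 / K"
          using K1 by (simp add: diff_divide_distrib)
        moreover have "\<dots> \<longleftrightarrow> K - 1 \<le> real (rh - j)" using K1 by (simp add: divide_le_cancel) linarith
        moreover have "K - 1 \<le> real (rh - j) \<longleftrightarrow> j = rl" using 3 unfolding K by auto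
        moreover have "0 < 1 - real (rh - j) / K" using pK 3 K1 by (simp add: field_simps)
        ultimately show ?thesis using 3 False unfolding stair_slope_left_def stair_slope_right_def fr
          K_def[symmetric] by auto
      qed
    qed
    thus "stair_slope_left c \<delta> rl rh y j = (if j = rl then 1 else 0)"
      "stair_slope_right c \<delta> rl rh y j = (if j = rh then 1 else 0)" by simp_all
  qed
qed

lemma stair_offset_bound:
  assumes d: "\<delta> > 0"
  shows "\<bar>stair_offset c \<delta> rl rh y j\<bar> \<le> \<delta>"
proof (cases "rl \<le> j \<and> j \<le> rh \<and> rl < rh")
  case True
  define K where "K = block_size rl rh"
  have K1: "K \<ge> 1" unfolding K_def by (rule block_size_ge)
  have pK: "real (rh - j) / K < 1" "real (rh - j) / K \<ge> 0" using True K1 unfolding K_def block_size_def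
    by (auto simp: field_simps)
  have "ramp K (stair_phase c \<delta> rl rh y j) - (y - c) / (K * \<delta>) = (ramp K (stair_phase c \<delta> rl rh y j) - stair_phase c \<delta> rl rh y j) - real (rh - j) / K"
    unfolding stair_phase_def K_def by simp
  moreover note ramp_bounds[OF K1, of "stair_phase c \<delta> rl rh y j"]
  ultimately have "\<bar>ramp K (stair_phase c \<delta> rl rh y j) - (y - c) / (K * \<delta>)\<bar> \<le> 1" using pK by linarith
  hence "\<delta> * \<bar>ramp K (stair_phase c \<delta> rl rh y j) - (y - c) / (K * \<delta>)\<bar> \<le> \<delta> * 1" using d by (intro mult_left_mono) auto
  thus ?thesis using True d unfolding stair_offset_def K_def by (simp add: abs_mult)
next
  case False thus ?thesis using d unfolding stair_offset_def by auto
qed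

text \<open>(S3) inside a block: a coordinate arriving from the left and a higher one leaving to the right
  can only be the bottom and the top of the block, at the end of a round, where the whole block
  sits at one level.\<close>

lemma stair_slopes_one_at_round_end:
  assumes d: "\<delta> > 0" and ha: "stair_slope_left c \<delta> rl rh z a = 1"
    and hb: "stair_slope_right c \<delta> rl rh z b = 1" and "a < b"
  shows "a = rl \<and> b = rh \<and> stair_phase c \<delta> rl rh z rh \<in> \<int>"
proof -
  have "rl \<le> a \<and> a \<le> rh" "rl \<le> b \<and> b \<le> rh"
    using ha hb stair_outside_block[of rl _ rh] by fastforce+
  hence ab: "rl \<le> a" "a \<le> rh" "rl \<le> b" "b \<le> rh" "rl < rh" using \<open>a < b\<close> by auto
  define K where "K = block_size rl rh"
  have K: "K = real (rh - rl) + 1" "K \<ge> 2" unfolding K_def block_size_def using ab by auto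
  define w where "w = stair_phase c \<delta> rl rh z a"
  define t where "t = real (b - a) / K"
  have fa: "0 < frac w" "frac w \<le> 1/K"
    using ha ab unfolding stair_slope_left_def w_def K_def by (auto split: if_splits)
  have "real (rh - a) = real (rh - b) + real (b - a)" using ab \<open>a < b\<close> by simp
  hence wb: "stair_phase c \<delta> rl rh z b = w + t"
    unfolding w_def t_def stair_phase_def K_def by (simp add: add_divide_distrib)
  have fb: "frac (w + t) < 1/K"
    using hb ab wb unfolding stair_slope_right_def K_def by (auto split: if_splits)
  have "1 \<le> real (b - a)" "real (b - a) \<le> K - 1" using ab \<open>a < b\<close> K by auto
  hence "1/K \<le> t" "t \<le> (K - 1)/K" using K unfolding t_def by (simp_all add: divide_right_mono)
  moreover have Km: "(K - 1)/K = 1 - 1/K" using K by (simp add: field_simps)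
  ultimately have t: "1/K \<le> t" "t \<le> 1 - 1/K" by simp_all
  have "frac w + t = 1"
  proof (rule ccontr)
    assume "frac w + t \<noteq> 1"
    hence "frac w + t < 1" using fa(2) t(2) by linarith
    moreover have "0 < 1/K" using K by simp
    hence "0 \<le> t \<and> t < 1" using t by linarith
    hence "frac t = t" by (intro frac_eq_id) simp
    ultimately have "frac (w + t) = frac w + t" by (simp add: frac_add)
    thus False using fb fa(1) t(1) by linarith
  qed
  hence "1 - 1/K \<le> t" using fa(2) by linarith
  hence "t = (K - 1)/K" using t(2) Km by simp
  moreover have "K \<noteq> 0" using K by simp
  ultimately have "real (b - a) = K - 1" unfolding t_def by (simp add: divide_cancel_right)
  hence "a = rl \<and> b = rh" using ab K by auto
  moreover have "stair_phase c \<delta> rl rh z rh = of_int (\<lfloor>w\<rfloor> + 1)"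
    using wb \<open>frac w + t = 1\<close> calculation unfolding frac_def by simp
  ultimately show ?thesis by simp
qed

lemma stair_S3:
  assumes d: "\<delta> > 0" and A: "\<forall>j\<in>{rl..rh}. A j = A rl"
    and ha: "stair_slope_left c \<delta> rl rh z a = 1" and hb: "stair_slope_right c \<delta> rl rh z b = 1"
    and "a < b"
  shows "\<forall>j\<in>{a..b}. stair A c \<delta> rl rh z j = stair A c \<delta> rl rh z a"
proof -
  have ab: "a = rl" "b = rh" and "stair_phase c \<delta> rl rh z rh \<in> \<int>"
    using stair_slopes_one_at_round_end[OF d ha hb \<open>a < b\<close>] by simp_all
  then obtain N where N: "stair_phase c \<delta> rl rh z rh = of_int N" by (elim Ints_cases)
  define K where "K = block_size rl rh"
  have K: "K = real (rh - rl) + 1" "K \<ge> 1" unfolding K_def block_size_def by auto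
  have level: "stair A c \<delta> rl rh z j = A rl + c / K + \<delta> * of_int N" if j: "j \<in> {rl..rh}" for j
  proof -
    have "stair_phase c \<delta> rl rh z j = of_int N - real (rh - j) / K"
      using N j unfolding stair_phase_def K_def[symmetric] by (simp add: field_simps)
    moreover have "real (rh - j) \<le> K - 1" using j K by auto
    ultimately have "ramp K (stair_phase c \<delta> rl rh z j) = of_int N"
      using ramp_of_int_minus[OF K(2)] by simp
    moreover have "rl < rh" using ab \<open>a < b\<close> by simp
    ultimately show ?thesis
      using stair_in_block[OF d _ _ \<open>rl < rh\<close>, of j A c z] j A[rule_format, OF j]
      unfolding K_def by simp
  qed
  show ?thesis
  proof
    fix j assume "j \<in> {a..b}"
    hence "j \<in> {rl..rh}" "a \<in> {rl..rh}" using ab \<open>a < b\<close> by auto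
    thus "stair A c \<delta> rl rh z j = stair A c \<delta> rl rh z a" using level by simp
  qed
qed

lemma sum_reverse_block: "(\<Sum>j\<in>{rl..rh}. h (rh - j)) = (\<Sum>p<rh - rl + 1. h p)" if "rl \<le> rh" for h :: "nat \<Rightarrow> real"
  by (rule sum.reindex_bij_witness[of _ "\<lambda>p. rh - p" "\<lambda>j. rh - j"]) (use that in auto)

lemma stair_offset_sum_block:
  assumes d: "\<delta> > 0" and r: "rl \<le> rh"
  shows "(\<Sum>j\<in>{rl..rh}. stair_offset c \<delta> rl rh y j) = 0"
proof (cases "rl < rh")
  case False thus ?thesis unfolding stair_offset_def by simp
next
  case True
  define Kn where "Kn = rh - rl + 1"
  have KK: "block_size rl rh = real Kn" unfolding block_size_def Kn_def ..
  have Kn1: "Kn \<ge> 1" unfolding Kn_def by simp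
  define \<tau> where "\<tau> = (y - c) / (real Kn * \<delta>)"
  have "(\<Sum>j\<in>{rl..rh}. stair_offset c \<delta> rl rh y j) = (\<Sum>j\<in>{rl..rh}. \<delta> * (ramp Kn (\<tau> - real (rh - j) / Kn) - \<tau>))"
    using True unfolding stair_offset_def stair_phase_def KK \<tau>_def by (intro sum.cong) auto
  also have "\<dots> = (\<Sum>p<Kn. \<delta> * (ramp Kn (\<tau> - real p / Kn) - \<tau>))"
    using sum_reverse_block[OF r, of "\<lambda>p. \<delta> * (ramp Kn (\<tau> - real p / Kn) - \<tau>)"] unfolding Kn_def by simp
  also have "\<dots> = \<delta> * ((\<Sum>p<Kn. ramp Kn (\<tau> - real p / Kn)) - Kn * \<tau>)"
    by (simp add: sum_distrib_left sum_subtractf right_diff_distrib)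
  also have "\<dots> = 0" using ramp_shifts_sum[OF Kn1] by simp
  finally show ?thesis .
qed

lemma stair_offset_sum:
  assumes d: "\<delta> > 0" and r: "rl \<le> rh" and S: "finite S" "{rl..rh} \<subseteq> S"
  shows "(\<Sum>j\<in>S. stair_offset c \<delta> rl rh y j) = 0"
proof -
  have "(\<Sum>j\<in>S. stair_offset c \<delta> rl rh y j) = (\<Sum>j\<in>{rl..rh}. stair_offset c \<delta> rl rh y j)"
    by (rule sum.mono_neutral_right[OF S(1) S(2)]) (auto simp: stair_offset_def)
  thus ?thesis using stair_offset_sum_block[OF d r] by simp
qed

lemma stair_offset_mono:
  assumes d: "\<delta> > 0" and j: "rl \<le> j" "Suc j \<le> rh"
  shows "stair_offset c \<delta> rl rh y j \<le> stair_offset c \<delta> rl rh y (Suc j)"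
proof -
  have K1: "block_size rl rh \<ge> 1" by (rule block_size_ge)
  have "stair_phase c \<delta> rl rh y j \<le> stair_phase c \<delta> rl rh y (Suc j)"
    unfolding stair_phase_def using K1 j by (intro diff_left_mono divide_right_mono) auto
  hence "ramp (block_size rl rh) (stair_phase c \<delta> rl rh y j) \<le> ramp (block_size rl rh) (stair_phase c \<delta> rl rh y (Suc j))"
    by (rule ramp_mono[OF K1])
  thus ?thesis using j d unfolding stair_offset_def by auto
qed

lemma stair_offset_top:
  assumes d: "\<delta> > 0" and r: "rl < rh" and m: "\<delta> * block_size rl rh * real m = dd - c" and y: "y \<le> dd"
  shows "stair_offset c \<delta> rl rh y rh \<le> (dd - y) / block_size rl rh"
proof -
  define K where "K = block_size rl rh"
  have K1: "K \<ge> 1" unfolding K_def by (rule block_size_ge)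
  have tm: "(dd - c) / (K * \<delta>) = real m" using m d K1 unfolding K_def by (auto simp: field_simps)
  define \<tau> where "\<tau> = (y - c) / (K * \<delta>)"
  have "\<tau> \<le> real m" unfolding \<tau>_def tm[symmetric] using y d K1 by (intro divide_right_mono) auto
  hence "ramp K \<tau> \<le> ramp K (of_int (int m))" by (intro ramp_mono[OF K1]) simp
  hence ph: "ramp K \<tau> \<le> real m" using ramp_of_int[of K "int m"] by simp
  have "stair_offset c \<delta> rl rh y rh = \<delta> * (ramp K \<tau> - \<tau>)"
    using r unfolding stair_offset_def stair_phase_def K_def[symmetric] \<tau>_def by simp
  also have "\<dots> \<le> \<delta> * (real m - \<tau>)" using ph d by (intro mult_left_mono) auto
  also have "\<delta> * (real m - \<tau>) = (dd - y) / K" unfolding \<tau>_def tm[symmetric] using d K1 by (simp add: field_simps)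
  finally show ?thesis unfolding K_def .
qed

lemma stair_offset_bottom:
  assumes d: "\<delta> > 0" and r: "rl < rh" and y: "c \<le> y"
  shows "stair_offset c \<delta> rl rh y rl \<ge> - (y - c) / block_size rl rh"
proof -
  define K where "K = block_size rl rh"
  have K2: "K \<ge> 2" unfolding K_def using block_size_ge r by auto
  have Kv: "K = real (rh - rl) + 1" unfolding K_def block_size_def using r by auto
  define \<tau> where "\<tau> = (y - c) / (K * \<delta>)"
  have t0: "\<tau> \<ge> 0" unfolding \<tau>_def using y d K2 by simp
  have pK: "real (rh - rl) \<le> K - 1" unfolding Kv by simp
  have "ramp K (of_int 0 - real (rh - rl) / K) = 0" using ramp_of_int_minus[OF _ pK, of 0] K2 by simp
  moreover have "ramp K (of_int 0 - real (rh - rl) / K) \<le> ramp K (\<tau> - real (rh - rl) / K)"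
    using t0 K2 by (intro ramp_mono) auto
  ultimately have ph: "ramp K (\<tau> - real (rh - rl) / K) \<ge> 0" by simp
  have "stair_offset c \<delta> rl rh y rl = \<delta> * (ramp K (\<tau> - real (rh - rl) / K) - \<tau>)"
    using r unfolding stair_offset_def stair_phase_def K_def[symmetric] \<tau>_def by simp
  also have "\<dots> \<ge> \<delta> * (0 - \<tau>)" using ph d by (intro mult_left_mono) auto
  also have "\<delta> * (0 - \<tau>) = - (y - c) / K" unfolding \<tau>_def using d K2 by (simp add: field_simps)
  finally show ?thesis unfolding K_def .
qed

locale generalized_system =
  fixes n :: nat and I :: "real set" and Pt :: "real \<Rightarrow> nat \<Rightarrow> real" and \<epsilon> :: real
  assumes n_pos: "n \<ge> 1" and interval: "is_interval I" and nonneg: "I \<subseteq> {0..}"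
    and gen: "gen_n_system n I Pt" and \<epsilon>: "\<epsilon> > 0"
begin

abbreviation "D \<equiv> nondiff_set n I Pt"

lemma Pt_continuous: "\<forall>j\<in>{1..n}. continuous_on I (\<lambda>t. Pt t j)"
  using gen[unfolded gen_n_system_def cont_piecewise_linear_def] by (elim conjE)

lemma D_isolated: "\<forall>q\<in>I. \<exists>e>0. \<forall>z\<in>D. \<bar>z - q\<bar> < e \<longrightarrow> z = q"
  using gen[unfolded gen_n_system_def cont_piecewise_linear_def] by (elim conjE)

lemma Pt_S1: "sys_cond1 n I Pt"
  using gen[unfolded gen_n_system_def] by (elim conjE)

lemma Pt_G2: "(\<forall>H. diff_subinterval n I Pt H \<longrightarrow>
        (\<exists>rl rh. 1 \<le> rl \<and> rl \<le> rh \<and> rh \<le> n \<and>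
           (\<forall>x\<in>H. \<forall>j\<in>{rl..rh}. Pt x j = Pt x rl) \<and>
           (\<forall>x\<in>H. \<forall>j\<in>{1..n}.
              ((\<lambda>t. Pt t j) has_real_derivative
                 (if rl \<le> j \<and> j \<le> rh then 1 / real (rh - rl + 1) else 0)) (at x))))"
  using gen[unfolded gen_n_system_def] by (elim conjE)

lemma Pt_G3: "(\<forall>q\<in>interior I \<inter> nondiff_set n I Pt. \<forall>rl rh sl sh.
        1 \<le> rl \<and> rl \<le> rh \<and> rh \<le> n \<and> 1 \<le> sl \<and> sl \<le> sh \<and> sh \<le> n \<and>
        (\<forall>j\<in>{1..n}. ((\<lambda>t. Pt t j) has_real_derivative
            (if rl \<le> j \<and> j \<le> rh then 1 / real (rh - rl + 1) else 0)) (at_left q)) \<and>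
        (\<forall>j\<in>{1..n}. ((\<lambda>t. Pt t j) has_real_derivative
            (if sl \<le> j \<and> j \<le> sh then 1 / real (sh - sl + 1) else 0)) (at_right q)) \<and>
        rl < sh \<longrightarrow>
        (\<forall>j\<in>{rl..sh}. Pt q j = Pt q rl))"
  using gen[unfolded gen_n_system_def] by (elim conjE)

lemma D_subset: "D \<subseteq> I" unfolding nondiff_set_def by auto

lemma not_in_D: "x \<in> I \<Longrightarrow> x \<notin> D \<Longrightarrow> x \<in> interior I \<and> (\<forall>j\<in>{1..n}. (\<lambda>t. Pt t j) differentiable (at x))"
  unfolding nondiff_set_def by auto

lemma bdd_below_I: "bdd_below I" using nonneg unfolding bdd_below_def by auto

lemma in_I_between: "a \<in> I \<Longrightarrow> b \<in> I \<Longrightarrow> a \<le> y \<Longrightarrow> y \<le> b \<Longrightarrow> y \<in> I"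
  using interval unfolding is_interval_1 by blast

definition "D_below x = {y\<in>D. y < x}"
definition "D_above x = {y\<in>D. x < y}"
definition "piece_lo x = (if D_below x \<noteq> {} then Sup (D_below x) else Inf I)"
definition "piece_bounded x = (D_above x \<noteq> {} \<or> bdd_above I)"
definition "piece_hi x = (if D_above x \<noteq> {} then Inf (D_above x) else Sup I)"
definition "piece x = {y. piece_lo x < y \<and> (piece_bounded x \<longrightarrow> y < piece_hi x)}"

lemma D_below_le_piece_lo: "z \<in> D_below x \<Longrightarrow> z \<le> piece_lo x"
  unfolding piece_lo_def by (auto intro!: cSup_upper simp: bdd_above_def D_below_def) (meson less_imp_le)

lemma piece_hi_le_D_above: "z \<in> D_above x \<Longrightarrow> piece_hi x \<le> z"
  unfolding piece_hi_def by (auto intro!: cInf_lower simp: bdd_below_def D_above_def) (meson less_imp_le)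

lemma D_gap:
  assumes "x \<in> I" "x \<notin> D"
  obtains e where "e > 0" "\<And>z. z \<in> D \<Longrightarrow> e \<le> \<bar>z - x\<bar>"
proof -
  obtain e where "e > 0" and e: "\<forall>z\<in>D. \<bar>z - x\<bar> < e \<longrightarrow> z = x"
    using D_isolated assms(1) by blast
  show thesis
  proof (rule that[OF \<open>e > 0\<close>])
    fix z assume "z \<in> D"
    thus "e \<le> \<bar>z - x\<bar>" using e assms(2) by (metis not_le)
  qed
qed

lemma piece_lo_less:
  assumes x: "x \<in> I" "x \<notin> D"
  shows "piece_lo x < x"
proof (cases "D_below x = {}")
  case True
  obtain r where "r > 0" "ball x r \<subseteq> I" using not_in_D[OF x] by (meson mem_interior)
  hence "x - r/2 \<in> I" by (auto simp: dist_real_def subset_iff)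
  hence "Inf I \<le> x - r/2" by (rule cInf_lower[OF _ bdd_below_I])
  thus ?thesis unfolding piece_lo_def using True \<open>r > 0\<close> by simp
next
  case False
  obtain e where "e > 0" and e: "\<And>z. z \<in> D \<Longrightarrow> e \<le> \<bar>z - x\<bar>" using D_gap[OF x] by blast
  have "Sup (D_below x) \<le> x - e"
    using False e by (intro cSup_least) (force simp: D_below_def)+
  thus ?thesis unfolding piece_lo_def using False \<open>e > 0\<close> by simp
qed

lemma less_piece_hi:
  assumes x: "x \<in> I" "x \<notin> D" and "piece_bounded x"
  shows "x < piece_hi x"
proof (cases "D_above x = {}")
  case True
  obtain r where "r > 0" "ball x r \<subseteq> I" using not_in_D[OF x] by (meson mem_interior)
  hence "x + r/2 \<in> I" by (auto simp: dist_real_def subset_iff)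
  moreover have "bdd_above I" using True \<open>piece_bounded x\<close> unfolding piece_bounded_def by simp
  ultimately have "x + r/2 \<le> Sup I" by (rule cSup_upper)
  thus ?thesis unfolding piece_hi_def using True \<open>r > 0\<close> by simp
next
  case False
  obtain e where "e > 0" and e: "\<And>z. z \<in> D \<Longrightarrow> e \<le> \<bar>z - x\<bar>" using D_gap[OF x] by blast
  have "x + e \<le> Inf (D_above x)"
    using False e by (intro cInf_greatest) (force simp: D_above_def)+
  thus ?thesis unfolding piece_hi_def using False \<open>e > 0\<close> by simp
qed

lemma mem_piece: "x \<in> I \<Longrightarrow> x \<notin> D \<Longrightarrow> x \<in> piece x"
  unfolding piece_def using piece_lo_less less_piece_hi by auto

lemma piece_disjoint_D:
  assumes "x \<notin> D"
  shows "piece x \<inter> D = {}"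
proof -
  have False if y: "y \<in> piece x" "y \<in> D" for y
  proof (cases "y < x")
    case True
    hence "y \<le> piece_lo x" using y by (intro D_below_le_piece_lo) (simp add: D_below_def)
    thus False using y unfolding piece_def by auto
  next
    case False
    have "y \<noteq> x" using y assms by auto
    hence above: "y \<in> D_above x" using y False unfolding D_above_def by auto
    hence "piece_hi x \<le> y" by (rule piece_hi_le_D_above)
    moreover have "piece_bounded x" using above unfolding piece_bounded_def by auto
    ultimately show False using y unfolding piece_def by auto
  qed
  thus ?thesis by blast
qed

lemma piece_subset:
  assumes x: "x \<in> I" "x \<notin> D"
  shows "piece x \<subseteq> I"
proof
  fix y assume y: "y \<in> piece x"
  obtain a where a: "a \<in> I" "a \<le> y"
  proof (cases "D_below x = {}")
    case True
    hence "Inf I < y" using y unfolding piece_def piece_lo_def by simp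
    then obtain a where "a \<in> I" "a < y" using cInf_less_iff[of I y] bdd_below_I x(1) by blast
    thus thesis using that by simp
  next
    case False
    then obtain z where z: "z \<in> D_below x" by blast
    hence "z \<le> piece_lo x" by (rule D_below_le_piece_lo)
    moreover have "z \<in> I" using z D_subset unfolding D_below_def by auto
    ultimately show thesis using y that[of z] unfolding piece_def by simp
  qed
  obtain b where b: "b \<in> I" "y \<le> b"
  proof (cases "piece_bounded x")
    case False
    hence "\<not> (\<forall>b\<in>I. b \<le> y)" unfolding piece_bounded_def bdd_above_def by blast
    then obtain b where "b \<in> I" "y < b" by (auto simp: not_le)
    thus thesis using that by simp
  next
    case bounded: True
    show thesis
    proof (cases "D_above x = {}")
      case True
      hence "bdd_above I" "y < Sup I" using y bounded unfolding piece_def piece_hi_def piece_bounded_def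
        by simp_all
      then obtain b where "b \<in> I" "y < b" using less_cSup_iff[of I y] x(1) by blast
      thus thesis using that by simp
    next
      case False
      then obtain z where z: "z \<in> D_above x" by blast
      hence "piece_hi x \<le> z" by (rule piece_hi_le_D_above)
      moreover have "z \<in> I" using z D_subset unfolding D_above_def by auto
      ultimately show thesis using y bounded that[of z] unfolding piece_def by simp
    qed
  qed
  show "y \<in> I" by (rule in_I_between[OF a(1) b(1) a(2) b(2)])
qed

lemma piece_same:
  assumes x: "x \<in> I" "x \<notin> D" and y: "y \<in> piece x"
  shows "D_below y = D_below x" "D_above y = D_above x" "piece_lo y = piece_lo x" "piece_hi y = piece_hi x" "piece_bounded y = piece_bounded x" "piece y = piece x"
proof -
    show D_below: "D_below y = D_below x"
  proof (intro set_eqI iffI)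
    fix z assume z: "z \<in> D_below y"
    show "z \<in> D_below x"
    proof (rule ccontr)
      assume "z \<notin> D_below x"
      moreover have "z \<noteq> x" using z x unfolding D_below_def by auto
      ultimately have "x < z" using z unfolding D_below_def by auto
      moreover have "z < y" using z unfolding D_below_def by auto
      ultimately have "z \<in> piece x" using y piece_lo_less[OF x] unfolding piece_def by auto
      thus False using piece_disjoint_D[OF x(2)] z unfolding D_below_def by auto
    qed
  next
    fix z assume z: "z \<in> D_below x"
    have "z < y"
    proof (cases "x \<le> y")
      case True thus ?thesis using z unfolding D_below_def by auto
    next
      case False
      have "z \<le> piece_lo x" by (rule D_below_le_piece_lo[OF z])
      thus ?thesis using y unfolding piece_def by auto
    qed
    thus "z \<in> D_below y" using z unfolding D_below_def by auto
  qed
  show D_above: "D_above y = D_above x"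
  proof (intro set_eqI iffI)
    fix z assume z: "z \<in> D_above y"
    show "z \<in> D_above x"
    proof (rule ccontr)
      assume "z \<notin> D_above x"
      moreover have "z \<noteq> x" using z x unfolding D_above_def by auto
      ultimately have "z < x" using z unfolding D_above_def by auto
      moreover have "y < z" using z unfolding D_above_def by auto
      ultimately have "z \<in> piece x" using y less_piece_hi[OF x] unfolding piece_def by auto
      thus False using piece_disjoint_D[OF x(2)] z unfolding D_above_def by auto
    qed
  next
    fix z assume z: "z \<in> D_above x"
    have "y < z"
    proof (cases "y \<le> x")
      case True thus ?thesis using z unfolding D_above_def by auto
    next
      case False
      have "piece_hi x \<le> z" by (rule piece_hi_le_D_above[OF z])
      moreover have "piece_bounded x" using z unfolding piece_bounded_def by auto
      ultimately show ?thesis using y unfolding piece_def by auto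
    qed
    thus "z \<in> D_above y" using z unfolding D_above_def by auto
  qed
  show "piece_lo y = piece_lo x" unfolding piece_lo_def D_below ..
  show "piece_hi y = piece_hi x" unfolding piece_hi_def D_above ..
  show "piece_bounded y = piece_bounded x" unfolding piece_bounded_def D_above ..
  thus "piece y = piece x" unfolding piece_def piece_lo_def piece_hi_def D_below D_above by simp
qed

lemma piece_open: "open (piece x)" "is_interval (piece x)"
proof -
  have "piece x = (if piece_bounded x then {piece_lo x<..<piece_hi x} else {piece_lo x<..})" unfolding piece_def by auto
  thus "open (piece x)" "is_interval (piece x)" by (auto simp: is_interval_1)
qed

end

lemma affine_at_right_endpoint:
  fixes f :: "real \<Rightarrow> real"
  assumes f: "continuous_on I f" and x: "x1 < x" "{x1..x} \<subseteq> I"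
    and eq: "\<And>y. x1 < y \<Longrightarrow> y < x \<Longrightarrow> f y = A + s * y"
  shows "f x = A + s * x"
proof -
  have "continuous_on {x1..x} f" using f x(2) by (rule continuous_on_subset)
  hence "continuous (at x within {x1..x}) f" using x(1) by (simp add: continuous_on_eq_continuous_within)
  hence l1: "(f \<longlongrightarrow> f x) (at_left x)" using at_within_Icc_at_left[OF x(1)] by (simp add: continuous_within)
  have ev: "\<forall>\<^sub>F y in at_left x. A + s * y = f y"
    using eventually_at_left_real[OF x(1)] by eventually_elim (use eq in auto)
  have "((\<lambda>y. A + s * y) \<longlongrightarrow> A + s * x) (at_left x)" by (intro tendsto_intros)
  hence "(f \<longlongrightarrow> A + s * x) (at_left x)" using ev by (rule Lim_transform_eventually)
  thus ?thesis using l1 tendsto_unique[OF trivial_limit_at_left_real] by blast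
qed

lemma affine_at_left_endpoint:
  fixes f :: "real \<Rightarrow> real"
  assumes f: "continuous_on I f" and x: "x < x2" "{x..x2} \<subseteq> I"
    and eq: "\<And>y. x < y \<Longrightarrow> y < x2 \<Longrightarrow> f y = A + s * y"
  shows "f x = A + s * x"
proof -
  have "continuous_on {x..x2} f" using f x(2) by (rule continuous_on_subset)
  hence "continuous (at x within {x..x2}) f" using x(1) by (simp add: continuous_on_eq_continuous_within)
  hence l1: "(f \<longlongrightarrow> f x) (at_right x)" using at_within_Icc_at_right[OF x(1)] by (simp add: continuous_within)
  have ev: "\<forall>\<^sub>F y in at_right x. A + s * y = f y"
    using eventually_at_right_real[OF x(1)] by eventually_elim (use eq in auto)
  have "((\<lambda>y. A + s * y) \<longlongrightarrow> A + s * x) (at_right x)" by (intro tendsto_intros)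
  hence "(f \<longlongrightarrow> A + s * x) (at_right x)" using ev by (rule Lim_transform_eventually)
  thus ?thesis using l1 tendsto_unique[OF trivial_limit_at_right_real] by blast
qed

lemma le_affine_at_left_endpoint:
  fixes u v s c h :: real
  assumes "h > 0" "\<And>t. c < t \<Longrightarrow> t < c + h \<Longrightarrow> u \<le> v + s * t"
  shows "u \<le> v + s * c"
proof (rule tendsto_le[OF trivial_limit_at_right_real])
  show "((\<lambda>t. v + s * t) \<longlongrightarrow> v + s * c) (at_right c)" by (intro tendsto_intros)
  show "((\<lambda>t. u) \<longlongrightarrow> u) (at_right c)" by simp
  show "\<forall>\<^sub>F t in at_right c. u \<le> v + s * t"
    using eventually_at_right_real[of c "c + h"] assms by (auto elim!: eventually_mono)
qed

lemma ge_affine_at_right_endpoint: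
  fixes u v s d h :: real
  assumes "h > 0" "\<And>t. d - h < t \<Longrightarrow> t < d \<Longrightarrow> v + s * t \<le> u"
  shows "v + s * d \<le> u"
proof (rule tendsto_le[OF trivial_limit_at_left_real])
  show "((\<lambda>t. v + s * t) \<longlongrightarrow> v + s * d) (at_left d)" by (intro tendsto_intros)
  show "((\<lambda>t. u) \<longlongrightarrow> u) (at_left d)" by simp
  show "\<forall>\<^sub>F t in at_left d. v + s * t \<le> u"
    using eventually_at_left_real[of "d - h" d] assms by (auto elim!: eventually_mono)
qed

context generalized_system begin

definition "moving_block x rl rh \<longleftrightarrow> 1 \<le> rl \<and> rl \<le> rh \<and> rh \<le> n \<and>
   (\<forall>y\<in>piece x. \<forall>j\<in>{rl..rh}. Pt y j = Pt y rl) \<and>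
   (\<forall>y\<in>piece x. \<forall>j\<in>{1..n}. ((\<lambda>t. Pt t j) has_real_derivative block_slope rl rh j) (at y))"
definition "block_of x = (SOME p. moving_block x (fst p) (snd p))"
definition "block_lo x = fst (block_of x)"
definition "block_hi x = snd (block_of x)"

lemma moving_block_block:
  assumes x: "x \<in> I" "x \<notin> D"
  shows "moving_block x (block_lo x) (block_hi x)"
proof -
  have H: "diff_subinterval n I Pt (piece x)"
    unfolding diff_subinterval_def
  proof (intro conjI ballI)
    show "piece x \<subseteq> I" "open (piece x)" "is_interval (piece x)" "piece x \<noteq> {}"
      using piece_subset[OF x] mem_piece[OF x] piece_open by auto
    fix y j assume y: "y \<in> piece x" and j: "j \<in> {1..n}"
    have "y \<in> I" "y \<notin> D" using y piece_subset[OF x] piece_disjoint_D[OF x(2)] by auto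
    thus "(\<lambda>t. Pt t j) differentiable (at y)" using not_in_D j by blast
  qed
  obtain rl rh where b: "1 \<le> rl \<and> rl \<le> rh \<and> rh \<le> n \<and>
           (\<forall>x\<in>piece x. \<forall>j\<in>{rl..rh}. Pt x j = Pt x rl) \<and>
           (\<forall>x\<in>piece x. \<forall>j\<in>{1..n}.
              ((\<lambda>t. Pt t j) has_real_derivative
                 (if rl \<le> j \<and> j \<le> rh then 1 / real (rh - rl + 1) else 0)) (at x))"
    using Pt_G2[rule_format, OF H] by (elim exE) (rule that)
  have d: "\<forall>y\<in>piece x. \<forall>j\<in>{1..n}. ((\<lambda>t. Pt t j) has_real_derivative block_slope rl rh j) (at y)"
    unfolding block_slope_def block_size_def using b by blast
  have "moving_block x rl rh" unfolding moving_block_def using b d by blast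
  hence "\<exists>p. moving_block x (fst p) (snd p)" by (intro exI[of _ "(rl, rh)"]) simp
  hence "moving_block x (fst (block_of x)) (snd (block_of x))" unfolding block_of_def by (rule someI_ex)
  thus ?thesis unfolding block_lo_def block_hi_def .
qed

lemma block_piece_eq:
  assumes x: "x \<in> I" "x \<notin> D" and y: "y \<in> piece x"
  shows "block_lo y = block_lo x" "block_hi y = block_hi x"
proof -
  have "moving_block y = moving_block x" unfolding moving_block_def[abs_def] piece_same(6)[OF x y] ..
  thus "block_lo y = block_lo x" "block_hi y = block_hi x" unfolding block_lo_def block_hi_def block_of_def by simp_all
qed

lemma block_facts:
  assumes x: "x \<in> I" "x \<notin> D"
  shows "1 \<le> block_lo x" "block_lo x \<le> block_hi x" "block_hi x \<le> n"
    "\<And>y j. y \<in> piece x \<Longrightarrow> j \<in> {block_lo x..block_hi x} \<Longrightarrow> Pt y j = Pt y (block_lo x)"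
    "\<And>y j. y \<in> piece x \<Longrightarrow> j \<in> {1..n} \<Longrightarrow> ((\<lambda>t. Pt t j) has_real_derivative block_slope (block_lo x) (block_hi x) j) (at y)"
  using moving_block_block[OF x] unfolding moving_block_def by blast+

definition "base x j = Pt x j - block_slope (block_lo x) (block_hi x) j * x"

lemma Pt_affine_on_piece:
  assumes x: "x \<in> I" "x \<notin> D" and y: "y \<in> piece x" and j: "j \<in> {1..n}"
  shows "Pt y j = base x j + block_slope (block_lo x) (block_hi x) j * y"
proof -
  define s where "s = block_slope (block_lo x) (block_hi x) j"
  have der: "((\<lambda>t. Pt t j - s * t) has_derivative (\<lambda>h. 0)) (at z)" if "z \<in> piece x" for z
  proof -
    have "((\<lambda>t. Pt t j) has_real_derivative s) (at z)" using block_facts(5)[OF x that j] unfolding s_def .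
    hence "((\<lambda>t. Pt t j - s * t) has_real_derivative (s - s * 1)) (at z)"
      by (intro derivative_eq_intros) auto
    hence "((\<lambda>t. Pt t j - s * t) has_real_derivative 0) (at z)" by simp
    moreover have "(*) (0::real) = (\<lambda>h. 0)" by auto
    ultimately show ?thesis unfolding has_field_derivative_def by simp
  qed
  have conn: "connected (piece x)" using piece_open(2) by (simp add: is_interval_connected)
  have "Pt y j - s * y = Pt x j - s * x"
    by (rule has_derivative_zero_unique_connected[OF piece_open(1) conn der y mem_piece[OF x]])
  thus ?thesis unfolding base_def s_def by simp
qed

lemma base_piece_eq:
  assumes x: "x \<in> I" "x \<notin> D" and y: "y \<in> piece x" and j: "j \<in> {1..n}"
  shows "base y j = base x j"
  using Pt_affine_on_piece[OF x y j] block_piece_eq[OF x y] unfolding base_def by simp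

definition "piece_block_size x = block_size (block_lo x) (block_hi x)"
definition "rounds x = nat \<lceil>(piece_hi x - piece_lo x) / (piece_block_size x * \<epsilon>)\<rceil> + 1"
definition "step_len x = (if piece_bounded x then (piece_hi x - piece_lo x) / (piece_block_size x * real (rounds x)) else \<epsilon>)"
definition "approx y j = (if y \<in> I \<and> y \<notin> D then stair (base y) (piece_lo y) (step_len y) (block_lo y) (block_hi y) y j else Pt y j)"

lemma step_len:
  assumes x: "x \<in> I" "x \<notin> D"
  shows "step_len x > 0" "step_len x \<le> \<epsilon>" "piece_bounded x \<Longrightarrow> step_len x * piece_block_size x * real (rounds x) = piece_hi x - piece_lo x"
proof -
  have K1: "piece_block_size x \<ge> 1" unfolding piece_block_size_def by (rule block_size_ge)
  have m1: "real (rounds x) \<ge> 1" unfolding rounds_def by simp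
  show "step_len x > 0"
  proof (cases "piece_bounded x")
    case True
    have "piece_hi x - piece_lo x > 0" using piece_lo_less[OF x] less_piece_hi[OF x] True by auto
    thus ?thesis using True K1 m1 unfolding step_len_def by simp
  next
    case False thus ?thesis using \<epsilon> unfolding step_len_def by simp
  qed
  show "piece_bounded x \<Longrightarrow> step_len x * piece_block_size x * real (rounds x) = piece_hi x - piece_lo x"
    using K1 m1 unfolding step_len_def by simp
  show "step_len x \<le> \<epsilon>"
  proof (cases "piece_bounded x")
    case True
    have "(piece_hi x - piece_lo x) / (piece_block_size x * \<epsilon>) \<le> real (rounds x)"
      unfolding rounds_def by linarith
    hence "(piece_hi x - piece_lo x) \<le> real (rounds x) * (piece_block_size x * \<epsilon>)" using K1 \<epsilon> by (simp add: divide_le_eq)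
    hence "(piece_hi x - piece_lo x) / (piece_block_size x * real (rounds x)) \<le> \<epsilon>" using K1 m1 by (simp add: divide_le_eq algebra_simps)
    thus ?thesis using True unfolding step_len_def by simp
  next
    case False thus ?thesis unfolding step_len_def by simp
  qed
qed

lemma approx_eq: "y \<in> I \<Longrightarrow> y \<notin> D \<Longrightarrow> approx y j = Pt y j + stair_offset (piece_lo y) (step_len y) (block_lo y) (block_hi y) y j"
  unfolding approx_def stair_def base_def by simp

lemma approx_on_piece:
  assumes x: "x \<in> I" "x \<notin> D" and y: "y \<in> piece x" and j: "j \<in> {1..n}"
  shows "approx y j = stair (base x) (piece_lo x) (step_len x) (block_lo x) (block_hi x) y j"
proof -
  have yI: "y \<in> I" "y \<notin> D" using y piece_subset[OF x] piece_disjoint_D[OF x(2)] by auto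
  note cs = piece_same[OF x y] and bs = block_piece_eq[OF x y]
  have "step_len y = step_len x" unfolding step_len_def rounds_def piece_block_size_def cs bs ..
  thus ?thesis using yI base_piece_eq[OF x y j] unfolding approx_def stair_def cs bs by simp
qed

end

context generalized_system begin

lemma piece_ending_at:
  assumes x: "x \<in> D" and y0: "y0 \<in> I" "y0 < x"
  shows "\<exists>x1. x1 \<in> I \<and> x1 \<notin> D \<and> x1 < x \<and> piece_bounded x1 \<and> piece_hi x1 = x"
proof -
  have xI: "x \<in> I" using x D_subset by blast
  obtain e0 where e0: "e0 > 0" "\<forall>z\<in>D. \<bar>z - x\<bar> < e0 \<longrightarrow> z = x" using D_isolated xI by blast
  define e1 where "e1 = min e0 (x - y0)"
  have e1: "e1 > 0" "e1 \<le> e0" "e1 \<le> x - y0" using e0 y0 unfolding e1_def by auto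
  define x1 where "x1 = x - e1/2"
  have x1I: "x1 \<in> I" using in_I_between[OF y0(1) xI, of x1] e1 unfolding x1_def by auto
  have x1D: "x1 \<notin> D"
  proof
    assume "x1 \<in> D"
    hence "x1 = x" using e0(2) e1 unfolding x1_def by auto
    thus False using e1 unfolding x1_def by auto
  qed
  have xA: "x \<in> D_above x1" using x e1 unfolding D_above_def x1_def by auto
  have "Inf (D_above x1) = x"
  proof (rule cInf_eq_minimum[OF xA])
    fix z assume z: "z \<in> D_above x1"
    show "x \<le> z"
    proof (rule ccontr)
      assume "\<not> x \<le> z"
      hence "\<bar>z - x\<bar> < e0" using z e1 unfolding D_above_def x1_def by auto
      hence "z = x" using e0(2) z unfolding D_above_def by auto
      thus False using \<open>\<not> x \<le> z\<close> by simp
    qed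
  qed
  hence "piece_hi x1 = x" "piece_bounded x1" using xA unfolding piece_hi_def piece_bounded_def by auto
  thus ?thesis using x1I x1D e1 unfolding x1_def by (intro exI[of _ "x - e1/2"]) auto
qed

lemma piece_starting_at:
  assumes x: "x \<in> D" and y0: "y0 \<in> I" "x < y0"
  shows "\<exists>x2. x2 \<in> I \<and> x2 \<notin> D \<and> x < x2 \<and> piece_lo x2 = x"
proof -
  have xI: "x \<in> I" using x D_subset by blast
  obtain e0 where e0: "e0 > 0" "\<forall>z\<in>D. \<bar>z - x\<bar> < e0 \<longrightarrow> z = x" using D_isolated xI by blast
  define e1 where "e1 = min e0 (y0 - x)"
  have e1: "e1 > 0" "e1 \<le> e0" "e1 \<le> y0 - x" using e0 y0 unfolding e1_def by auto
  define x2 where "x2 = x + e1/2"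
  have x2I: "x2 \<in> I" using in_I_between[OF xI y0(1), of x2] e1 unfolding x2_def by auto
  have x2D: "x2 \<notin> D"
  proof
    assume "x2 \<in> D"
    hence "x2 = x" using e0(2) e1 unfolding x2_def by auto
    thus False using e1 unfolding x2_def by auto
  qed
  have xB: "x \<in> D_below x2" using x e1 unfolding D_below_def x2_def by auto
  have "Sup (D_below x2) = x"
  proof (rule cSup_eq_maximum[OF xB])
    fix z assume z: "z \<in> D_below x2"
    show "z \<le> x"
    proof (rule ccontr)
      assume "\<not> z \<le> x"
      hence "\<bar>z - x\<bar> < e0" using z e1 unfolding D_below_def x2_def by auto
      hence "z = x" using e0(2) z unfolding D_below_def by auto
      thus False using \<open>\<not> z \<le> x\<close> by simp
    qed
  qed
  hence "piece_lo x2 = x" using xB unfolding piece_lo_def by auto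
  thus ?thesis using x2I x2D e1 unfolding x2_def by (intro exI[of _ "x + e1/2"]) auto
qed

lemma approx_left_of_D:
  assumes x: "x \<in> D" and x1: "x1 \<in> I" "x1 \<notin> D" "x1 < x" "piece_bounded x1" "piece_hi x1 = x"
  shows "\<exists>e>0. (\<forall>y\<in>I. x - e < y \<and> y \<le> x \<longrightarrow>
      (\<forall>j\<in>{1..n}. approx y j = approx x j + (if j = block_lo x1 then 1 else 0) * (y - x))) \<and>
    (\<forall>j\<in>{1..n}. ((\<lambda>t. Pt t j) has_real_derivative block_slope (block_lo x1) (block_hi x1) j) (at_left x))"
proof -
  have xI: "x \<in> I" using x D_subset by blast
  define c where "c = piece_lo x1"
  define \<delta> where "\<delta> = step_len x1"
  define rl where "rl = block_lo x1"
  define rh where "rh = block_hi x1"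
  define A where "A = base x1"
  have cx1: "c < x1" using piece_lo_less[OF x1(1,2)] unfolding c_def .
  have cm: "y \<in> piece x1" if "c < y" "y < x" for y
    using that x1 unfolding piece_def c_def by auto
  have dp: "\<delta> > 0" using step_len(1)[OF x1(1,2)] unfolding \<delta>_def .
  have rlh: "rl \<le> rh" using block_facts(2)[OF x1(1,2)] unfolding rl_def rh_def .
  have m: "\<delta> * block_size rl rh * real (rounds x1) = x - c"
    using step_len(3)[OF x1(1,2) x1(4)] x1(5) unfolding \<delta>_def c_def rl_def rh_def piece_block_size_def by simp
  have sub: "{x1..x} \<subseteq> I" using in_I_between[OF x1(1) xI] by auto
  have Ptx: "Pt x j = A j + block_slope rl rh j * x" if j: "j \<in> {1..n}" for j
  proof (rule affine_at_right_endpoint[of I _ x1])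
    show "continuous_on I (\<lambda>t. Pt t j)" using Pt_continuous j by blast
    show "x1 < x" "{x1..x} \<subseteq> I" using x1 sub by auto
    fix y assume "x1 < y" "y < x"
    hence "y \<in> piece x1" using cm cx1 by auto
    thus "Pt y j = A j + block_slope rl rh j * y" using Pt_affine_on_piece[OF x1(1,2) _ j] unfolding A_def rl_def rh_def by blast
  qed
  note Qd = stair_at_full_rounds[OF dp rlh m]
  obtain \<eta> where \<eta>: "\<eta> > 0" "\<forall>y. x - \<eta> < y \<and> y \<le> x \<longrightarrow>
     (\<forall>j. stair A c \<delta> rl rh y j = stair A c \<delta> rl rh x j + stair_slope_left c \<delta> rl rh x j * (y - x))"
    using stair_left_affine[OF dp, of x A c rl rh] by blast
  define e where "e = min \<eta> (x - c)"
  have ep: "e > 0" using \<eta> cx1 x1 unfolding e_def by auto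
  show ?thesis
  proof (intro exI[of _ e] conjI ballI impI ep)
    fix y j assume y: "y \<in> I" "x - e < y \<and> y \<le> x" and j: "j \<in> {1..n}"
    have PPx: "approx x j = Pt x j" using x unfolding approx_def by simp
    show "approx y j = approx x j + (if j = block_lo x1 then 1 else 0) * (y - x)"
    proof (cases "y = x")
      case True thus ?thesis by simp
    next
      case False
      hence yc: "y \<in> piece x1" using y cm unfolding e_def by auto
      have yy: "x - \<eta> < y \<and> y \<le> x" using y unfolding e_def by auto
      have "approx y j = stair A c \<delta> rl rh y j" using approx_on_piece[OF x1(1,2) yc j] unfolding A_def c_def \<delta>_def rl_def rh_def .
      also have "\<dots> = stair A c \<delta> rl rh x j + stair_slope_left c \<delta> rl rh x j * (y - x)" using \<eta>(2) yy by blast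
      also have "\<dots> = approx x j + (if j = block_lo x1 then 1 else 0) * (y - x)"
        using Qd Ptx[OF j] PPx unfolding rl_def by simp
      finally show ?thesis .
    qed
  next
    fix j assume j: "j \<in> {1..n}"
    show "((\<lambda>t. Pt t j) has_real_derivative block_slope (block_lo x1) (block_hi x1) j) (at_left x)"
    proof (rule has_real_derivative_at_left_if_affine)
      show "x - x1 > 0" using x1 by simp
      fix y assume y: "x - (x - x1) < y" "y < x"
      hence "y \<in> piece x1" using cm cx1 by auto
      hence "Pt y j = A j + block_slope rl rh j * y" using Pt_affine_on_piece[OF x1(1,2) _ j] unfolding A_def rl_def rh_def by blast
      thus "Pt y j = Pt x j + block_slope (block_lo x1) (block_hi x1) j * (y - x)" using Ptx[OF j] unfolding rl_def rh_def
        by (simp add: algebra_simps)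
    qed
  qed
qed

lemma approx_right_of_D:
  assumes x: "x \<in> D" and x2: "x2 \<in> I" "x2 \<notin> D" "x < x2" "piece_lo x2 = x"
  shows "\<exists>e>0. (\<forall>y\<in>I. x \<le> y \<and> y < x + e \<longrightarrow>
      (\<forall>j\<in>{1..n}. approx y j = approx x j + (if j = block_hi x2 then 1 else 0) * (y - x))) \<and>
    (\<forall>j\<in>{1..n}. ((\<lambda>t. Pt t j) has_real_derivative block_slope (block_lo x2) (block_hi x2) j) (at_right x))"
proof -
  have xI: "x \<in> I" using x D_subset by blast
  define \<delta> where "\<delta> = step_len x2"
  define rl where "rl = block_lo x2"
  define rh where "rh = block_hi x2"
  define A where "A = base x2"
  have x2c: "x2 \<in> piece x2" using mem_piece[OF x2(1,2)] .
  have cm: "y \<in> piece x2" if "x < y" "y \<le> x2" for y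
    using that x2 x2c unfolding piece_def by auto
  have dp: "\<delta> > 0" using step_len(1)[OF x2(1,2)] unfolding \<delta>_def .
  have rlh: "rl \<le> rh" using block_facts(2)[OF x2(1,2)] unfolding rl_def rh_def .
  have sub: "{x..x2} \<subseteq> I" using in_I_between[OF xI x2(1)] by auto
  have Ptx: "Pt x j = A j + block_slope rl rh j * x" if j: "j \<in> {1..n}" for j
  proof (rule affine_at_left_endpoint[of I _ _ x2])
    show "continuous_on I (\<lambda>t. Pt t j)" using Pt_continuous j by blast
    show "x < x2" "{x..x2} \<subseteq> I" using x2 sub by auto
    fix y assume "x < y" "y < x2"
    hence "y \<in> piece x2" using cm by auto
    thus "Pt y j = A j + block_slope rl rh j * y" using Pt_affine_on_piece[OF x2(1,2) _ j] unfolding A_def rl_def rh_def by blast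
  qed
  have "\<delta> * block_size rl rh * real 0 = x - x" by simp
  note Qc = stair_at_full_rounds[OF dp rlh this]
  obtain \<eta> where \<eta>: "\<eta> > 0" "\<forall>y. x \<le> y \<and> y < x + \<eta> \<longrightarrow>
     (\<forall>j. stair A x \<delta> rl rh y j = stair A x \<delta> rl rh x j + stair_slope_right x \<delta> rl rh x j * (y - x))"
    using stair_right_affine[OF dp, of x A x rl rh] by blast
  define e where "e = min \<eta> (x2 - x)"
  have ep: "e > 0" using \<eta> x2 unfolding e_def by auto
  show ?thesis
  proof (intro exI[of _ e] conjI ballI impI ep)
    fix y j assume y: "y \<in> I" "x \<le> y \<and> y < x + e" and j: "j \<in> {1..n}"
    have PPx: "approx x j = Pt x j" using x unfolding approx_def by simp
    show "approx y j = approx x j + (if j = block_hi x2 then 1 else 0) * (y - x)"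
    proof (cases "y = x")
      case True thus ?thesis by simp
    next
      case False
      hence yc: "y \<in> piece x2" using y cm unfolding e_def by auto
      have yy: "x \<le> y \<and> y < x + \<eta>" using y unfolding e_def by auto
      have "approx y j = stair A x \<delta> rl rh y j" using approx_on_piece[OF x2(1,2) yc j] x2(4) unfolding A_def \<delta>_def rl_def rh_def by simp
      also have "\<dots> = stair A x \<delta> rl rh x j + stair_slope_right x \<delta> rl rh x j * (y - x)" using \<eta>(2) yy by blast
      also have "\<dots> = approx x j + (if j = block_hi x2 then 1 else 0) * (y - x)"
        using Qc Ptx[OF j] PPx unfolding rh_def by simp
      finally show ?thesis .
    qed
  next
    fix j assume j: "j \<in> {1..n}"
    show "((\<lambda>t. Pt t j) has_real_derivative block_slope (block_lo x2) (block_hi x2) j) (at_right x)"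
    proof (rule has_real_derivative_at_right_if_affine)
      show "x2 - x > 0" using x2 by simp
      fix y assume y: "x < y" "y < x + (x2 - x)"
      hence "y \<in> piece x2" using cm by auto
      hence "Pt y j = A j + block_slope rl rh j * y" using Pt_affine_on_piece[OF x2(1,2) _ j] unfolding A_def rl_def rh_def by blast
      thus "Pt y j = Pt x j + block_slope (block_lo x2) (block_hi x2) j * (y - x)" using Ptx[OF j] unfolding rl_def rh_def
        by (simp add: algebra_simps)
    qed
  qed
qed

end

context generalized_system begin

lemma approx_left_side_D:
  assumes x: "x \<in> D"
  shows "\<exists>eL>0. \<exists>\<alpha>. (\<forall>j\<in>{1..n}. \<alpha> j \<in> {0,1}) \<and>
    (\<forall>y\<in>I. x - eL < y \<and> y \<le> x \<longrightarrow> (\<forall>j\<in>{1..n}. approx y j = approx x j + \<alpha> j * (y - x))) \<and>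
    (x \<in> interior I \<longrightarrow> (\<exists>rl rh. 1 \<le> rl \<and> rl \<le> rh \<and> rh \<le> n \<and> (\<forall>j. \<alpha> j = (if j = rl then 1 else 0)) \<and>
       (\<forall>j\<in>{1..n}. ((\<lambda>t. Pt t j) has_real_derivative block_slope rl rh j) (at_left x))))"
proof (cases "\<exists>y0\<in>I. y0 < x")
  case True
  then obtain y0 where y0: "y0 \<in> I" "y0 < x" by blast
  obtain x1 where x1: "x1 \<in> I" "x1 \<notin> D" "x1 < x" "piece_bounded x1" "piece_hi x1 = x" using piece_ending_at[OF x y0] by blast
  obtain e where e: "e > 0" "\<forall>y\<in>I. x - e < y \<and> y \<le> x \<longrightarrow>
      (\<forall>j\<in>{1..n}. approx y j = approx x j + (if j = block_lo x1 then 1 else 0) * (y - x))"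
    "\<forall>j\<in>{1..n}. ((\<lambda>t. Pt t j) has_real_derivative block_slope (block_lo x1) (block_hi x1) j) (at_left x)"
    using approx_left_of_D[OF x x1] by blast
  note bf = block_facts[OF x1(1,2)]
  show ?thesis
    by (intro exI[of _ e] exI[of _ "\<lambda>j. if j = block_lo x1 then 1 else 0"] conjI impI e(1) e(2)
          exI[of _ "block_lo x1"] exI[of _ "block_hi x1"] bf(1-3) e(3) allI) auto
next
  case False
  have ni: "x \<notin> interior I"
  proof
    assume "x \<in> interior I"
    then obtain r where r: "r > 0" "ball x r \<subseteq> I" by (meson mem_interior)
    hence "x - r/2 \<in> I" by (auto simp: dist_real_def subset_iff)
    thus False using False r by auto
  qed
  show ?thesis
  proof (intro exI[of _ 1] exI[of _ "\<lambda>j. 0"] conjI ballI impI)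
    fix y j assume y: "y \<in> I" "x - 1 < y \<and> y \<le> x"
    hence "y = x" using False by force
    thus "approx y j = approx x j + 0 * (y - x)" by simp
  qed (use ni in auto)
qed

lemma approx_right_side_D:
  assumes x: "x \<in> D"
  shows "\<exists>eR>0. \<exists>\<beta>. (\<forall>j\<in>{1..n}. \<beta> j \<in> {0,1}) \<and>
    (\<forall>y\<in>I. x \<le> y \<and> y < x + eR \<longrightarrow> (\<forall>j\<in>{1..n}. approx y j = approx x j + \<beta> j * (y - x))) \<and>
    (x \<in> interior I \<longrightarrow> (\<exists>sl sh. 1 \<le> sl \<and> sl \<le> sh \<and> sh \<le> n \<and> (\<forall>j. \<beta> j = (if j = sh then 1 else 0)) \<and>
       (\<forall>j\<in>{1..n}. ((\<lambda>t. Pt t j) has_real_derivative block_slope sl sh j) (at_right x))))"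
proof (cases "\<exists>y0\<in>I. x < y0")
  case True
  then obtain y0 where y0: "y0 \<in> I" "x < y0" by blast
  obtain x2 where x2: "x2 \<in> I" "x2 \<notin> D" "x < x2" "piece_lo x2 = x" using piece_starting_at[OF x y0] by blast
  obtain e where e: "e > 0" "\<forall>y\<in>I. x \<le> y \<and> y < x + e \<longrightarrow>
      (\<forall>j\<in>{1..n}. approx y j = approx x j + (if j = block_hi x2 then 1 else 0) * (y - x))"
    "\<forall>j\<in>{1..n}. ((\<lambda>t. Pt t j) has_real_derivative block_slope (block_lo x2) (block_hi x2) j) (at_right x)"
    using approx_right_of_D[OF x x2] by blast
  note bf = block_facts[OF x2(1,2)]
  show ?thesis
    by (intro exI[of _ e] exI[of _ "\<lambda>j. if j = block_hi x2 then 1 else 0"] conjI impI e(1) e(2)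
          exI[of _ "block_lo x2"] exI[of _ "block_hi x2"] bf(1-3) e(3) allI) auto
next
  case False
  have ni: "x \<notin> interior I"
  proof
    assume "x \<in> interior I"
    then obtain r where r: "r > 0" "ball x r \<subseteq> I" by (meson mem_interior)
    hence "x + r/2 \<in> I" by (auto simp: dist_real_def subset_iff)
    thus False using False r by auto
  qed
  show ?thesis
  proof (intro exI[of _ 1] exI[of _ "\<lambda>j. 0"] conjI ballI impI)
    fix y j assume y: "y \<in> I" "x \<le> y \<and> y < x + 1"
    hence "y = x" using False by force
    thus "approx y j = approx x j + 0 * (y - x)" by simp
  qed (use ni in auto)
qed

lemma Pt_S3_at_D:
  assumes "x \<in> interior I" "x \<in> D" "1 \<le> rl" "rl \<le> rh" "rh \<le> n" "1 \<le> sl" "sl \<le> sh" "sh \<le> n"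
    and "rl < sh"
    and "\<forall>j\<in>{1..n}. ((\<lambda>t. Pt t j) has_real_derivative block_slope rl rh j) (at_left x)"
    and "\<forall>j\<in>{1..n}. ((\<lambda>t. Pt t j) has_real_derivative block_slope sl sh j) (at_right x)"
  shows "\<forall>j\<in>{rl..sh}. Pt x j = Pt x rl"
proof -
  have xD: "x \<in> interior I \<inter> D" using assms(1,2) by blast
  have hyp: "1 \<le> rl \<and> rl \<le> rh \<and> rh \<le> n \<and> 1 \<le> sl \<and> sl \<le> sh \<and> sh \<le> n \<and>
      (\<forall>j\<in>{1..n}. ((\<lambda>t. Pt t j) has_real_derivative
          (if rl \<le> j \<and> j \<le> rh then 1 / real (rh - rl + 1) else 0)) (at_left x)) \<and>
      (\<forall>j\<in>{1..n}. ((\<lambda>t. Pt t j) has_real_derivative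
          (if sl \<le> j \<and> j \<le> sh then 1 / real (sh - sl + 1) else 0)) (at_right x)) \<and> rl < sh"
    using assms(3-) unfolding block_slope_def block_size_def by blast
  show ?thesis using bspec[OF Pt_G3 xD, rule_format, OF hyp] by blast
qed

lemma locally_unit_slopes_at_D:
  assumes x: "x \<in> D"
  shows "locally_unit_slopes n I approx x"
proof -
  obtain eL \<alpha> where L: "eL > 0" "\<forall>j\<in>{1..n}. \<alpha> j \<in> {0,1}"
    "\<forall>y\<in>I. x - eL < y \<and> y \<le> x \<longrightarrow> (\<forall>j\<in>{1..n}. approx y j = approx x j + \<alpha> j * (y - x))"
    "x \<in> interior I \<longrightarrow> (\<exists>rl rh. 1 \<le> rl \<and> rl \<le> rh \<and> rh \<le> n \<and> (\<forall>j. \<alpha> j = (if j = rl then 1 else 0)) \<and>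
       (\<forall>j\<in>{1..n}. ((\<lambda>t. Pt t j) has_real_derivative block_slope rl rh j) (at_left x)))"
    using approx_left_side_D[OF x] by blast
  obtain eR \<beta> where R: "eR > 0" "\<forall>j\<in>{1..n}. \<beta> j \<in> {0,1}"
    "\<forall>y\<in>I. x \<le> y \<and> y < x + eR \<longrightarrow> (\<forall>j\<in>{1..n}. approx y j = approx x j + \<beta> j * (y - x))"
    "x \<in> interior I \<longrightarrow> (\<exists>sl sh. 1 \<le> sl \<and> sl \<le> sh \<and> sh \<le> n \<and> (\<forall>j. \<beta> j = (if j = sh then 1 else 0)) \<and>
       (\<forall>j\<in>{1..n}. ((\<lambda>t. Pt t j) has_real_derivative block_slope sl sh j) (at_right x)))"
    using approx_right_side_D[OF x] by blast
  show ?thesis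
  proof (rule locally_unit_slopesI[OF L(1) R(1) _ L(3) R(3)])
    show "\<forall>j\<in>{1..n}. \<alpha> j \<in> {0,1} \<and> \<beta> j \<in> {0,1}" using L(2) R(2) by blast
    assume xi: "x \<in> interior I"
    show "\<forall>a\<in>{1..n}. \<forall>b\<in>{1..n}. \<alpha> a = 1 \<and> \<beta> b = 1 \<and> a < b \<longrightarrow> (\<forall>j\<in>{a..b}. approx x j = approx x a)"
    proof (intro ballI impI)
      fix a b j assume ab: "\<alpha> a = 1 \<and> \<beta> b = 1 \<and> a < b" and j: "j \<in> {a..b}"
      obtain rl rh where l: "1 \<le> rl" "rl \<le> rh" "rh \<le> n" "\<forall>j. \<alpha> j = (if j = rl then 1 else 0)"
        "\<forall>j\<in>{1..n}. ((\<lambda>t. Pt t j) has_real_derivative block_slope rl rh j) (at_left x)"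
        using L(4) xi by blast
      obtain sl sh where r: "1 \<le> sl" "sl \<le> sh" "sh \<le> n" "\<forall>j. \<beta> j = (if j = sh then 1 else 0)"
        "\<forall>j\<in>{1..n}. ((\<lambda>t. Pt t j) has_real_derivative block_slope sl sh j) (at_right x)"
        using R(4) xi by blast
      have "a = rl" using ab l(4) by (metis zero_neq_one)
      moreover have "b = sh" using ab r(4) by (metis zero_neq_one)
      ultimately have "rl < sh" "j \<in> {rl..sh}" using ab j by auto
      hence "Pt x j = Pt x rl" using Pt_S3_at_D[OF xi x l(1-3) r(1-3) _ l(5) r(5)] by blast
      hence "Pt x j = Pt x a" using \<open>a = rl\<close> by simp
      moreover have "approx x = Pt x" using x unfolding approx_def by auto
      ultimately show "approx x j = approx x a" by simp
    qed
  qed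
qed

end

context generalized_system begin

lemma piece_nhd:
  assumes "x \<in> I" "x \<notin> D"
  obtains e where "e > 0" "\<And>y. \<bar>y - x\<bar> < e \<Longrightarrow> y \<in> piece x"
  using piece_open(1) mem_piece[OF assms] unfolding open_dist dist_real_def by metis

lemma base_eq_on_block:
  assumes x: "x \<in> I" "x \<notin> D" and j: "j \<in> {block_lo x..block_hi x}"
  shows "base x j = base x (block_lo x)"
proof -
  have "Pt x j = Pt x (block_lo x)" using block_facts(4)[OF x mem_piece[OF x] j] .
  moreover have "block_slope (block_lo x) (block_hi x) j = block_slope (block_lo x) (block_hi x) (block_lo x)"
    using j unfolding block_slope_def by auto
  ultimately show ?thesis unfolding base_def by simp
qed

lemma locally_unit_slopes_off_D:
  assumes x: "x \<in> I" "x \<notin> D"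
  shows "locally_unit_slopes n I approx x"
proof -
  define c \<delta> rl rh A where "c = piece_lo x" and "\<delta> = step_len x" and "rl = block_lo x"
    and "rh = block_hi x" and "A = base x"
  have "\<delta> > 0" using step_len(1)[OF x] unfolding \<delta>_def .
  have approx_stair: "approx y j = stair A c \<delta> rl rh y j" if "y \<in> piece x" "j \<in> {1..n}" for y j
    using approx_on_piece[OF x that] unfolding A_def c_def \<delta>_def rl_def rh_def .
  obtain e where "e > 0" and e: "\<And>y. \<bar>y - x\<bar> < e \<Longrightarrow> y \<in> piece x" using piece_nhd[OF x] by blast
  obtain \<eta>1 where "\<eta>1 > 0" and \<eta>1: "\<forall>y. x - \<eta>1 < y \<and> y \<le> x \<longrightarrow>
      (\<forall>j. stair A c \<delta> rl rh y j = stair A c \<delta> rl rh x j + stair_slope_left c \<delta> rl rh x j * (y - x))"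
    using stair_left_affine[OF \<open>\<delta> > 0\<close>] by blast
  obtain \<eta>2 where "\<eta>2 > 0" and \<eta>2: "\<forall>y. x \<le> y \<and> y < x + \<eta>2 \<longrightarrow>
      (\<forall>j. stair A c \<delta> rl rh y j = stair A c \<delta> rl rh x j + stair_slope_right c \<delta> rl rh x j * (y - x))"
    using stair_right_affine[OF \<open>\<delta> > 0\<close>] by blast
  show ?thesis
  proof (rule locally_unit_slopesI[of "min e \<eta>1" "min e \<eta>2"])
    show "\<forall>y\<in>I. x - min e \<eta>1 < y \<and> y \<le> x \<longrightarrow>
        (\<forall>j\<in>{1..n}. approx y j = approx x j + stair_slope_left c \<delta> rl rh x j * (y - x))"
    proof (intro ballI impI)
      fix y j assume y: "x - min e \<eta>1 < y \<and> y \<le> x" and j: "j \<in> {1..n}"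
      have "min e \<eta>1 \<le> e" "min e \<eta>2 \<le> e" by (rule min.cobounded1)+
      hence "\<bar>y - x\<bar> < e" using y by (auto simp: abs_if)
      hence "approx y j = stair A c \<delta> rl rh y j" using approx_stair e j by blast
      also have "\<dots> = stair A c \<delta> rl rh x j + stair_slope_left c \<delta> rl rh x j * (y - x)"
      proof -
        have "min e \<eta>1 \<le> \<eta>1" by (rule min.cobounded2)
        hence "x - \<eta>1 < y \<and> y \<le> x" using y by linarith
        thus ?thesis using \<eta>1 by blast
      qed
      finally show "approx y j = approx x j + stair_slope_left c \<delta> rl rh x j * (y - x)"
        using approx_stair[OF mem_piece[OF x] j] by simp
    qed
    show "\<forall>y\<in>I. x \<le> y \<and> y < x + min e \<eta>2 \<longrightarrow>
        (\<forall>j\<in>{1..n}. approx y j = approx x j + stair_slope_right c \<delta> rl rh x j * (y - x))"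
    proof (intro ballI impI)
      fix y j assume y: "x \<le> y \<and> y < x + min e \<eta>2" and j: "j \<in> {1..n}"
      have "min e \<eta>1 \<le> e" "min e \<eta>2 \<le> e" by (rule min.cobounded1)+
      hence "\<bar>y - x\<bar> < e" using y by (auto simp: abs_if)
      hence "approx y j = stair A c \<delta> rl rh y j" using approx_stair e j by blast
      also have "\<dots> = stair A c \<delta> rl rh x j + stair_slope_right c \<delta> rl rh x j * (y - x)"
      proof -
        have "min e \<eta>2 \<le> \<eta>2" by (rule min.cobounded2)
        hence "x \<le> y \<and> y < x + \<eta>2" using y by linarith
        thus ?thesis using \<eta>2 by blast
      qed
      finally show "approx y j = approx x j + stair_slope_right c \<delta> rl rh x j * (y - x)"
        using approx_stair[OF mem_piece[OF x] j] by simp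
    qed
    show "\<forall>a\<in>{1..n}. \<forall>b\<in>{1..n}. stair_slope_left c \<delta> rl rh x a = 1 \<and> stair_slope_right c \<delta> rl rh x b = 1
        \<and> a < b \<longrightarrow> (\<forall>j\<in>{a..b}. approx x j = approx x a)"
    proof (intro ballI impI)
      fix a b j assume a: "a \<in> {1..n}" and b: "b \<in> {1..n}" and j: "j \<in> {a..b}"
        and h: "stair_slope_left c \<delta> rl rh x a = 1 \<and> stair_slope_right c \<delta> rl rh x b = 1 \<and> a < b"
      have "\<forall>j\<in>{rl..rh}. A j = A rl" using base_eq_on_block[OF x] unfolding A_def rl_def rh_def by blast
      hence "stair A c \<delta> rl rh x j = stair A c \<delta> rl rh x a"
        using stair_S3[OF \<open>\<delta> > 0\<close>, of rl rh A c x a b] h j by blast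
      moreover have "j \<in> {1..n}" using a b j by auto
      ultimately show "approx x j = approx x a" using approx_stair[OF mem_piece[OF x]] a by simp
    qed
    show "\<forall>j\<in>{1..n}. stair_slope_left c \<delta> rl rh x j \<in> {0,1} \<and> stair_slope_right c \<delta> rl rh x j \<in> {0,1}"
      using stair_slopes_01 by blast
  qed (use \<open>e > 0\<close> \<open>\<eta>1 > 0\<close> \<open>\<eta>2 > 0\<close> in simp_all)
qed

lemma locally_unit_slopes_approx: "x \<in> I \<Longrightarrow> locally_unit_slopes n I approx x"
  using locally_unit_slopes_off_D locally_unit_slopes_at_D by blast

lemma approx_close:
  assumes y: "y \<in> I" and j: "j \<in> {1..n}"
  shows "\<bar>Pt y j - approx y j\<bar> \<le> \<epsilon>"
proof (cases "y \<in> D")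
  case True thus ?thesis unfolding approx_def using \<epsilon> by simp
next
  case False
  have "\<bar>stair_offset (piece_lo y) (step_len y) (block_lo y) (block_hi y) y j\<bar> \<le> step_len y" using stair_offset_bound step_len(1)[OF y False] by blast
  thus ?thesis using approx_eq[OF y False, of j] step_len(2)[OF y False] by simp
qed

end

context generalized_system begin

context
  fixes y assumes y: "y \<in> I" "y \<notin> D"
begin

lemma Pt_in_block:
  assumes "t \<in> piece y" "block_lo y \<le> j" "j \<le> block_hi y"
  shows "Pt t j = base y j + t / piece_block_size y"
  using Pt_affine_on_piece[OF y assms(1), of j] block_facts(1-3)[OF y] assms(2,3)
  unfolding block_slope_def piece_block_size_def by simp

lemma Pt_off_block:
  assumes "t \<in> piece y" "j \<in> {1..n}" "\<not> (block_lo y \<le> j \<and> j \<le> block_hi y)"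
  shows "Pt t j = base y j"
  using Pt_affine_on_piece[OF y assms(1,2)] assms(3) unfolding block_slope_def by simp

lemma approx_off_stair:
  assumes "\<not> (block_lo y \<le> j \<and> j \<le> block_hi y \<and> block_lo y < block_hi y)"
  shows "approx y j = Pt y j"
  using approx_eq[OF y, of j] assms unfolding stair_offset_def by simp

lemma approx_sum: "(\<Sum>j=1..n. approx y j) = y"
proof -
  have "(\<Sum>j=1..n. stair_offset (piece_lo y) (step_len y) (block_lo y) (block_hi y) y j) = 0"
    using block_facts(1-3)[OF y] by (intro stair_offset_sum step_len(1)[OF y]) auto
  thus ?thesis using Pt_S1 y(1) unfolding approx_eq[OF y] sys_cond1_def by (simp add: sum.distrib)
qed

lemma approx_block_lo_ge:
  assumes "block_lo y < block_hi y"
  shows "base y (block_lo y) + piece_lo y / piece_block_size y \<le> approx y (block_lo y)"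
proof -
  have "- (y - piece_lo y) / piece_block_size y \<le>
      stair_offset (piece_lo y) (step_len y) (block_lo y) (block_hi y) y (block_lo y)"
    using stair_offset_bottom[OF step_len(1)[OF y] assms] piece_lo_less[OF y]
    unfolding piece_block_size_def by simp
  moreover have "Pt y (block_lo y) = base y (block_lo y) + y / piece_block_size y"
    using Pt_in_block[OF mem_piece[OF y]] block_facts(2)[OF y] by simp
  ultimately show ?thesis unfolding approx_eq[OF y] by (simp add: diff_divide_distrib)
qed

lemma approx_block_hi_le:
  assumes "block_lo y < block_hi y" "piece_bounded y"
  shows "approx y (block_hi y) \<le> base y (block_hi y) + piece_hi y / piece_block_size y"
proof -
  have "stair_offset (piece_lo y) (step_len y) (block_lo y) (block_hi y) y (block_hi y) \<le>
      (piece_hi y - y) / piece_block_size y"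
    using stair_offset_top[OF step_len(1)[OF y] assms(1) _ less_imp_le[OF less_piece_hi[OF y assms(2)]]]
      step_len(3)[OF y assms(2)] unfolding piece_block_size_def by simp
  moreover have "Pt y (block_hi y) = base y (block_hi y) + y / piece_block_size y"
    using Pt_in_block[OF mem_piece[OF y]] block_facts(2)[OF y] by simp
  ultimately show ?thesis unfolding approx_eq[OF y] by (simp add: diff_divide_distrib)
qed

text \<open>The inequalities of (S1) between the block and its neighbours hold on the whole piece, so by
  continuity also at its ends.\<close>

lemma block_lo_at_piece_start:
  shows "block_lo y = 1 \<Longrightarrow> 0 \<le> base y 1 + piece_lo y / piece_block_size y"
    and "1 < block_lo y \<Longrightarrow> base y (block_lo y - 1) \<le> base y (block_lo y) + piece_lo y / piece_block_size y"
proof -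
  have near: "t \<in> piece y" if "piece_lo y < t" "t < piece_lo y + (y - piece_lo y)" for t
    using that mem_piece[OF y] unfolding piece_def by auto
  have tI: "t \<in> I" if "t \<in> piece y" for t using that piece_subset[OF y] by blast
  have lo: "Pt t (block_lo y) = base y (block_lo y) + t / piece_block_size y" if "t \<in> piece y" for t
    using Pt_in_block[OF that] block_facts(2)[OF y] by simp
  have "y - piece_lo y > 0" using piece_lo_less[OF y] by simp
  show "0 \<le> base y 1 + piece_lo y / piece_block_size y" if "block_lo y = 1"
  proof -
    have "0 \<le> base y 1 + 1 / piece_block_size y * piece_lo y"
    proof (rule le_affine_at_left_endpoint[OF \<open>y - piece_lo y > 0\<close>])
      fix t assume "piece_lo y < t" "t < piece_lo y + (y - piece_lo y)"
      hence "t \<in> piece y" by (rule near)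
      thus "0 \<le> base y 1 + 1 / piece_block_size y * t"
        using Pt_S1 tI lo that unfolding sys_cond1_def by force
    qed
    thus ?thesis by simp
  qed
  show "base y (block_lo y - 1) \<le> base y (block_lo y) + piece_lo y / piece_block_size y"
    if "1 < block_lo y"
  proof -
    have "base y (block_lo y - 1) \<le> base y (block_lo y) + 1 / piece_block_size y * piece_lo y"
  proof (rule le_affine_at_left_endpoint[OF \<open>y - piece_lo y > 0\<close>])
    fix t assume "piece_lo y < t" "t < piece_lo y + (y - piece_lo y)"
    hence t: "t \<in> piece y" by (rule near)
    have j: "block_lo y - 1 \<in> {1..<n}" using that block_facts(2,3)[OF y] by auto
    hence "Pt t (block_lo y - 1) \<le> Pt t (Suc (block_lo y - 1))"
      using Pt_S1 tI[OF t] unfolding sys_cond1_def by blast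
    moreover have "Pt t (block_lo y - 1) = base y (block_lo y - 1)"
      using Pt_off_block[OF t] j by auto
    ultimately show "base y (block_lo y - 1) \<le> base y (block_lo y) + 1 / piece_block_size y * t"
      using lo[OF t] that by simp
  qed
    thus ?thesis by simp
  qed
qed

text \<open>Above the block a constant coordinate sits, and the block cannot rise above it: so the piece is
  bounded to the right (here $I \subseteq [0, \infty)$ is used) and the inequality persists at its
  right end.\<close>

lemma block_hi_at_piece_end:
  assumes "block_hi y < n"
  shows "piece_bounded y"
    and "base y (block_hi y) + piece_hi y / piece_block_size y \<le> base y (Suc (block_hi y))"
proof -
  define K where "K = piece_block_size y"
  have "K \<ge> 1" unfolding K_def piece_block_size_def by (rule block_size_ge)
  have j: "block_hi y \<in> {1..<n}" using assms block_facts(1,2)[OF y] by auto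
  have below: "base y (block_hi y) + t / K \<le> base y (Suc (block_hi y))" if t: "t \<in> piece y" for t
  proof -
    have "Pt t (block_hi y) \<le> Pt t (Suc (block_hi y))"
      using Pt_S1 piece_subset[OF y] t j unfolding sys_cond1_def by blast
    moreover have "Pt t (block_hi y) = base y (block_hi y) + t / K"
      using Pt_in_block[OF t] block_facts(2)[OF y] unfolding K_def by simp
    moreover have "Pt t (Suc (block_hi y)) = base y (Suc (block_hi y))"
      using Pt_off_block[OF t] j by auto
    ultimately show ?thesis by simp
  qed
  show bounded: "piece_bounded y"
  proof (rule ccontr)
    assume "\<not> piece_bounded y"
    define t where "t = y + K * \<bar>base y (Suc (block_hi y)) - base y (block_hi y)\<bar> + K"
    have "0 \<le> K * \<bar>base y (Suc (block_hi y)) - base y (block_hi y)\<bar>" using \<open>K \<ge> 1\<close> by simp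
    hence "piece_lo y < t" using piece_lo_less[OF y] \<open>K \<ge> 1\<close> unfolding t_def by linarith
    hence "t \<in> piece y" using \<open>\<not> piece_bounded y\<close> unfolding piece_def by simp
    moreover have "t / K = y / K + \<bar>base y (Suc (block_hi y)) - base y (block_hi y)\<bar> + 1"
      using \<open>K \<ge> 1\<close> unfolding t_def by (simp add: field_simps)
    moreover have "y / K \<ge> 0" using y(1) nonneg \<open>K \<ge> 1\<close> by auto
    ultimately show False using below by fastforce
  qed
  have "y < piece_hi y" using less_piece_hi[OF y bounded] .
  have "base y (block_hi y) + 1 / piece_block_size y * piece_hi y \<le> base y (Suc (block_hi y))"
  proof (rule ge_affine_at_right_endpoint[of "piece_hi y - y"])
    show "piece_hi y - y > 0" using \<open>y < piece_hi y\<close> by simp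
    fix t assume "piece_hi y - (piece_hi y - y) < t" "t < piece_hi y"
    hence "t \<in> piece y" using bounded piece_lo_less[OF y] unfolding piece_def by auto
    thus "base y (block_hi y) + 1 / piece_block_size y * t \<le> base y (Suc (block_hi y))"
      using below unfolding K_def by simp
  qed
  thus "base y (block_hi y) + piece_hi y / piece_block_size y \<le> base y (Suc (block_hi y))" by simp
qed

lemma approx_mono_step:
  assumes j: "j \<in> {1..<n}"
  shows "approx y j \<le> approx y (Suc j)"
proof -
  define rl rh where "rl = block_lo y" and "rh = block_hi y"
  have "rl \<le> rh" using block_facts(2)[OF y] unfolding rl_def rh_def .
  have S1: "Pt y j \<le> Pt y (Suc j)" using Pt_S1 y(1) j unfolding sys_cond1_def by blast
  consider "\<not> rl < rh" | "rl < rh" "\<not> (rl \<le> j \<and> j \<le> rh)" "\<not> (rl \<le> Suc j \<and> Suc j \<le> rh)"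
    | "rl < rh" "rl \<le> j" "Suc j \<le> rh" | "rl < rh" "j = rh" | "rl < rh" "Suc j = rl" by linarith
  thus ?thesis
  proof cases
    case 3
    have "Pt y j = Pt y (Suc j)"
      using block_facts(4)[OF y mem_piece[OF y], of j] block_facts(4)[OF y mem_piece[OF y], of "Suc j"] 3
      unfolding rl_def rh_def by simp
    moreover have "stair_offset (piece_lo y) (step_len y) rl rh y j \<le>
        stair_offset (piece_lo y) (step_len y) rl rh y (Suc j)"
      using stair_offset_mono[OF step_len(1)[OF y]] 3 by blast
    ultimately show ?thesis unfolding approx_eq[OF y] rl_def rh_def by simp
  next
    case 4
    have "rh < n" using j 4 by auto
    hence "approx y (Suc rh) = base y (Suc rh)"
      using approx_off_stair Pt_off_block[OF mem_piece[OF y]] unfolding rl_def rh_def by auto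
    thus ?thesis using 4 approx_block_hi_le block_hi_at_piece_end[OF \<open>rh < n\<close>[unfolded rh_def]]
      unfolding rl_def rh_def by force
  next
    case 5
    have "1 < rl" using j 5 by auto
    have "approx y j = base y j"
      using approx_off_stair Pt_off_block[OF mem_piece[OF y], of j] j 5 unfolding rl_def rh_def by auto
    moreover have "j = rl - 1" using 5 by simp
    ultimately show ?thesis
      using 5 approx_block_lo_ge block_lo_at_piece_start(2)[OF \<open>1 < rl\<close>[unfolded rl_def]]
      unfolding rl_def rh_def by force
  qed (use S1 approx_off_stair in \<open>auto simp: rl_def rh_def\<close>)
qed

lemma approx_nonneg: "0 \<le> approx y 1"
proof (cases "block_lo y = 1 \<and> block_lo y < block_hi y")
  case True
  thus ?thesis using approx_block_lo_ge block_lo_at_piece_start(1) by force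
next
  case False
  hence "approx y 1 = Pt y 1" using block_facts(1)[OF y] by (intro approx_off_stair) auto
  thus ?thesis using Pt_S1 y(1) unfolding sys_cond1_def by simp
qed

end

lemma approx_sys_cond1: "sys_cond1 n I approx"
  unfolding sys_cond1_def
proof
  fix y assume y: "y \<in> I"
  show "0 \<le> approx y 1 \<and> (\<forall>j\<in>{1..<n}. approx y j \<le> approx y (Suc j)) \<and> (\<Sum>j=1..n. approx y j) = y"
  proof (cases "y \<in> D")
    case True
    hence "approx y = Pt y" unfolding approx_def by auto
    thus ?thesis using Pt_S1 y unfolding sys_cond1_def by simp
  next
    case False
    thus ?thesis using approx_nonneg approx_sum approx_mono_step y by blast
  qed
qed

end

theorem mainTheorem6:
  fixes n :: nat and I :: "real set" and Pt :: "real \<Rightarrow> nat \<Rightarrow> real" and \<epsilon> :: real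
  assumes "n \<ge> 2"
    and "is_interval I" and "I \<subseteq> {0..}" and "interior I \<noteq> {}"
    and "gen_n_system n I Pt"
    and "\<epsilon> > 0"
  shows "\<exists>P. n_system n I P \<and> (\<forall>q\<in>I. \<forall>j\<in>{1..n}. \<bar>Pt q j - P q j\<bar> \<le> \<epsilon>)"
proof -
  interpret generalized_system n I Pt \<epsilon>
    using assms by unfold_locales auto
  show ?thesis
  proof (intro exI[of _ approx] conjI ballI)
    show "n_system n I approx"
      using n_system_if_locally_unit_slopes[OF assms(2) approx_sys_cond1] locally_unit_slopes_approx
      by blast
    show "\<bar>Pt q j - approx q j\<bar> \<le> \<epsilon>" if "q \<in> I" "j \<in> {1..n}" for q j
      using approx_close that by blast
  qed
qed

end
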